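(* Let $\mathcal H$ be a complex separable Hilbert space and let $T \in \mathcal B(\mathcal H)$ with polar decomposition $T = V|T|$. Then $$\|T - V\| = \min\{\|T - X\| : X \in \mathcal I,\ \ker(X) = \ker(T)\}.$$
   Context: $\mathcal B(\mathcal H)$ is the algebra of bounded linear operators on $\mathcal H$, and $\|\cdot\|$ is the operator norm. $\mathcal I$ denotes the set of all partial isometries on $\mathcal H$, i.e. $X \in \mathcal B(\mathcal H)$ with $XX^*X = X$. $|T| = (T^*T)^{1/2}$. The polar factor of $T$ is the unique $V \in \mathcal I$ with $T = V|T|$ and $\ker V = \ker T$. *)

theory Defs
  imports "HOL-Analysis.Analysis"
begin

text \<open>HOL-Analysis has only real inner product spaces, so a complex Hilbert space is
introduced as a class: a real Banach space with a complex scalar multiplication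
extending the real one and a complex inner product (linear in the second argument,
conjugate-linear in the first) inducing the norm.\<close>

class complex_hilbert = banach +
  fixes scaleC :: "complex \<Rightarrow> 'a \<Rightarrow> 'a" (infixr \<open>*\<^sub>C\<close> 75)
    and cinner :: "'a \<Rightarrow> 'a \<Rightarrow> complex"
  assumes scaleC_of_real: "scaleC (of_real r) x = r *\<^sub>R x"
    and scaleC_add_right: "scaleC a (x + y) = scaleC a x + scaleC a y"
    and scaleC_add_left: "scaleC (a + b) x = scaleC a x + scaleC b x"
    and scaleC_scaleC: "scaleC a (scaleC b x) = scaleC (a * b) x"
    and cinner_cnj: "cinner x y = cnj (cinner y x)"
    and cinner_add_right: "cinner x (y + z) = cinner x y + cinner x z"
    and cinner_scaleC_right: "cinner x (scaleC c y) = c * cinner x y"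
    and cinner_self_real: "Im (cinner x x) = 0"
    and cinner_self_nonneg: "0 \<le> Re (cinner x x)"
    and cinner_self_eq_zero: "cinner x x = 0 \<longleftrightarrow> x = 0"
    and norm_cinner: "norm x = sqrt (Re (cinner x x))"

definition bounded_op :: "('a::complex_hilbert \<Rightarrow> 'a) \<Rightarrow> bool" where
  "bounded_op T \<longleftrightarrow> bounded_linear T \<and> (\<forall>c x. T (c *\<^sub>C x) = c *\<^sub>C T x)"

text \<open>The Hilbert-space adjoint (exists uniquely for bounded operators by Riesz).\<close>
definition adj :: "('a::complex_hilbert \<Rightarrow> 'a) \<Rightarrow> ('a \<Rightarrow> 'a)" where
  "adj T = (THE S. \<forall>x y. cinner (T x) y = cinner x (S y))"

definition positive_op :: "('a::complex_hilbert \<Rightarrow> 'a) \<Rightarrow> bool" where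
  "positive_op P \<longleftrightarrow> bounded_op P \<and>
     (\<forall>x. Im (cinner x (P x)) = 0 \<and> 0 \<le> Re (cinner x (P x)))"

definition op_abs :: "('a::complex_hilbert \<Rightarrow> 'a) \<Rightarrow> ('a \<Rightarrow> 'a)" where
  "op_abs T = (THE P. positive_op P \<and> P \<circ> P = adj T \<circ> T)"

definition op_ker :: "('a::complex_hilbert \<Rightarrow> 'a) \<Rightarrow> 'a set" where
  "op_ker T = {x. T x = 0}"

definition partial_isometry :: "('a::complex_hilbert \<Rightarrow> 'a) \<Rightarrow> bool" where
  "partial_isometry X \<longleftrightarrow> bounded_op X \<and> X \<circ> adj X \<circ> X = X"

definition polar_factor :: "('a::complex_hilbert \<Rightarrow> 'a) \<Rightarrow> ('a \<Rightarrow> 'a)" where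
  "polar_factor T = (THE V. partial_isometry V \<and> T = V \<circ> op_abs T \<and> op_ker V = op_ker T)"

end

theory Submission
  imports Defs
begin

text \<open>Let \<open>X\<close> be a partial isometry with \<open>ker X = ker T\<close> and \<open>\<delta> = \<parallel>T - X\<parallel>\<close>. On
\<open>M = (ker T)\<^sup>\<bottom>\<close> the operator \<open>X\<close> is isometric and \<open>\<parallel>|T| v\<parallel> = \<parallel>T v\<parallel>\<close>, so
\<open>(1 - \<delta>) \<parallel>v\<parallel> \<le> \<parallel>|T| v\<parallel> \<le> (1 + \<delta>) \<parallel>v\<parallel>\<close> on \<open>M\<close>. Since \<open>|T|\<close> is positive and leaves \<open>M\<close>
invariant, these norm bounds transfer to its quadratic form, and for a self-adjoint
operator the quadratic form controls the norm: \<open>\<parallel>|T| u - u\<parallel> \<le> \<delta> \<parallel>u\<parallel>\<close> on \<open>M\<close>. Finally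
\<open>T - V = V (|T| - 1)\<close> on \<open>M\<close> and both sides vanish on \<open>ker T\<close>, so \<open>\<parallel>T - V\<parallel> \<le> \<delta>\<close>.\<close>

section \<open>Complex inner product algebra\<close>

lemma scaleC_zero_right [simp]: "c *\<^sub>C (0::'a::complex_hilbert) = 0"
  using scaleC_add_right[of c 0 0] by simp

lemma scaleC_minus_right: "c *\<^sub>C (- x::'a::complex_hilbert) = - (c *\<^sub>C x)"
  using scaleC_add_right[of c x "-x"] by (simp add: eq_neg_iff_add_eq_0 add.commute)

lemma scaleC_diff_right: "c *\<^sub>C (x - y::'a::complex_hilbert) = c *\<^sub>C x - c *\<^sub>C y"
  using scaleC_add_right[of c x "-y"] by (simp add: scaleC_minus_right)

lemma scaleC_scaleR: "c *\<^sub>C (r *\<^sub>R (x::'a::complex_hilbert)) = r *\<^sub>R (c *\<^sub>C x)"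
  by (metis scaleC_of_real scaleC_scaleC mult.commute)

lemma cinner_zero_right [simp]: "cinner (x::'a::complex_hilbert) 0 = 0"
  using cinner_add_right[of x 0 0] by simp

lemma cinner_zero_left [simp]: "cinner 0 (x::'a::complex_hilbert) = 0"
  by (subst cinner_cnj) simp

lemma cinner_add_left: "cinner (x + y) (z::'a::complex_hilbert) = cinner x z + cinner y z"
  by (subst (1 2 3) cinner_cnj) (simp add: cinner_add_right)

lemma cinner_minus_right: "cinner x (- y::'a::complex_hilbert) = - cinner x y"
  using cinner_add_right[of x y "-y"] by (simp add: eq_neg_iff_add_eq_0 add.commute)

lemma cinner_minus_left: "cinner (- x) (y::'a::complex_hilbert) = - cinner x y"
  by (subst (1 2) cinner_cnj) (simp add: cinner_minus_right)

lemma cinner_diff_right: "cinner x (y - z::'a::complex_hilbert) = cinner x y - cinner x z"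
  using cinner_add_right[of x y "-z"] by (simp add: cinner_minus_right)

lemma cinner_diff_left: "cinner (x - y) (z::'a::complex_hilbert) = cinner x z - cinner y z"
  using cinner_add_left[of x "-y" z] by (simp add: cinner_minus_left)

lemma cinner_scaleC_left: "cinner (c *\<^sub>C x) (y::'a::complex_hilbert) = cnj c * cinner x y"
  by (subst (1 2) cinner_cnj) (simp add: cinner_scaleC_right)

lemma cinner_scaleR_right: "cinner x (r *\<^sub>R y::'a::complex_hilbert) = of_real r * cinner x y"
  by (metis cinner_scaleC_right scaleC_of_real)

lemma cinner_scaleR_left: "cinner (r *\<^sub>R x) (y::'a::complex_hilbert) = of_real r * cinner x y"
  by (metis cinner_scaleC_left scaleC_of_real complex_cnj_complex_of_real)

lemma cinner_self: "cinner (x::'a::complex_hilbert) x = of_real ((norm x)\<^sup>2)"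
proof -
  have "(norm x)\<^sup>2 = Re (cinner x x)" using norm_cinner[of x] cinner_self_nonneg[of x] by simp
  then show ?thesis using cinner_self_real[of x] by (simp add: complex_eq_iff)
qed

lemma Re_cinner_self: "Re (cinner (x::'a::complex_hilbert) x) = (norm x)\<^sup>2"
  by (simp add: cinner_self)

lemma Re_cinner_commute: "Re (cinner y (x::'a::complex_hilbert)) = Re (cinner x y)"
  by (subst cinner_cnj) simp

lemma norm_add_sq:
  "(norm (x + y::'a::complex_hilbert))\<^sup>2 = (norm x)\<^sup>2 + 2 * Re (cinner x y) + (norm y)\<^sup>2"
  by (simp add: Re_cinner_self[symmetric] cinner_add_left cinner_add_right Re_cinner_commute[of y x]
      del: Re_cinner_self)

lemma norm_diff_sq:
  "(norm (x - y::'a::complex_hilbert))\<^sup>2 = (norm x)\<^sup>2 - 2 * Re (cinner x y) + (norm y)\<^sup>2"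
  using norm_add_sq[of x "-y"] by (simp add: cinner_minus_right)

lemma norm_eq_of_cinner_eq:
  "cinner (x::'a::complex_hilbert) x = cinner (y::'b::complex_hilbert) y \<Longrightarrow> norm x = norm y"
  by (metis Re_cinner_self norm_ge_zero power2_eq_iff_nonneg)

lemma norm_add_Pythagorean:
  "cinner x (y::'a::complex_hilbert) = 0 \<Longrightarrow> (norm (x + y))\<^sup>2 = (norm x)\<^sup>2 + (norm y)\<^sup>2"
  by (simp add: norm_add_sq)

lemma cinner_ext: "(\<And>z. cinner z a = cinner z (b::'a::complex_hilbert)) \<Longrightarrow> a = b"
  by (metis cinner_diff_right cinner_self_eq_zero eq_iff_diff_eq_0)

lemma cinner_Cauchy_Schwarz: "cmod (cinner (x::'a::complex_hilbert) y) \<le> norm x * norm y"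
proof (cases "y = 0")
  case False
  then have ny: "norm y > 0" by simp
  define a where "a = cinner y x / of_real ((norm y)\<^sup>2)"
  define z where "z = x - a *\<^sub>C y"
  have yz: "cinner y z = 0" using ny
    by (simp add: z_def a_def cinner_diff_right cinner_scaleC_right cinner_self)
  have zy: "cinner z y = 0" by (subst cinner_cnj) (simp add: yz)
  have "x = z + a *\<^sub>C y" by (simp add: z_def)
  then have "cinner x x = cinner z z + cnj a * a * cinner y y"
    by (simp add: cinner_add_left cinner_add_right cinner_scaleC_left cinner_scaleC_right yz zy)
  then have "(cmod a * norm y)\<^sup>2 \<le> (norm x)\<^sup>2"
    using cmod_power2[of a] by (simp add: cinner_self complex_eq_iff power_mult_distrib
        power2_eq_square algebra_simps)
  then have "cmod a * norm y \<le> norm x" by (rule power2_le_imp_le) simp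
  moreover have "cmod a * norm y = cmod (cinner x y) / norm y"
    using ny unfolding a_def by (subst cinner_cnj) (simp add: norm_divide norm_power
        power2_eq_square norm_mult)
  ultimately show ?thesis using ny by (simp add: field_simps)
qed simp

lemma Re_cinner_le: "Re (cinner (x::'a::complex_hilbert) y) \<le> norm x * norm y"
  using complex_Re_le_cmod cinner_Cauchy_Schwarz order_trans by blast

lemma bounded_bilinear_cinner: "bounded_bilinear (cinner :: 'a::complex_hilbert \<Rightarrow> 'a \<Rightarrow> complex)"
proof (rule bounded_bilinear.intro)
  show "\<exists>K. \<forall>a b. norm (cinner (a::'a) b) \<le> norm a * norm b * K"
    by (rule exI[of _ 1]) (simp add: cinner_Cauchy_Schwarz)
qed (auto simp: cinner_add_left cinner_add_right cinner_scaleR_left cinner_scaleR_right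
    scaleR_conv_of_real)

lemmas tendsto_cinner [tendsto_intros] = bounded_bilinear.tendsto[OF bounded_bilinear_cinner]
lemmas bounded_linear_cinner_left = bounded_bilinear.bounded_linear_left[OF bounded_bilinear_cinner]
lemmas bounded_linear_cinner_right =
  bounded_bilinear.bounded_linear_right[OF bounded_bilinear_cinner]

lemma norm_scaleC: "norm (c *\<^sub>C (x::'a::complex_hilbert)) = cmod c * norm x"
proof -
  have "(norm (c *\<^sub>C x))\<^sup>2 = Re (c * cnj c * cinner x x)"
    by (simp only: Re_cinner_self[symmetric] cinner_scaleC_left cinner_scaleC_right mult.assoc)
  also have "\<dots> = (cmod c * norm x)\<^sup>2"
    by (simp only: complex_mult_cnj cinner_self cmod_power2 power_mult_distrib flip:
        of_real_mult) simp
  finally show ?thesis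
    by (metis norm_ge_zero zero_le_mult_iff power2_eq_iff_nonneg)
qed

lemma bounded_linear_scaleC: "bounded_linear (\<lambda>x::'a::complex_hilbert. c *\<^sub>C x)"
  by (rule bounded_linear_intro[where K="cmod c"])
     (simp_all only: scaleC_add_right scaleC_scaleR norm_scaleC mult.commute order_refl)


section \<open>Orthogonal projection onto closed subspaces\<close>

definition csubspace :: "'a::complex_hilbert set \<Rightarrow> bool" where
  "csubspace K \<longleftrightarrow> 0 \<in> K \<and> (\<forall>x\<in>K. \<forall>y\<in>K. x + y \<in> K) \<and> (\<forall>c. \<forall>x\<in>K. c *\<^sub>C x \<in> K)"

lemma csubspace_zero: "csubspace K \<Longrightarrow> 0 \<in> K"
  unfolding csubspace_def by blast

lemma csubspace_add: "csubspace K \<Longrightarrow> x \<in> K \<Longrightarrow> y \<in> K \<Longrightarrow> x + y \<in> K"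
  unfolding csubspace_def by blast

lemma csubspace_scaleC: "csubspace K \<Longrightarrow> x \<in> K \<Longrightarrow> c *\<^sub>C x \<in> K"
  unfolding csubspace_def by blast

lemma csubspace_scaleR: "csubspace K \<Longrightarrow> x \<in> K \<Longrightarrow> r *\<^sub>R x \<in> K"
  unfolding csubspace_def by (metis scaleC_of_real)

lemma csubspace_diff: "csubspace K \<Longrightarrow> x \<in> K \<Longrightarrow> y \<in> K \<Longrightarrow> x - y \<in> K"
  using csubspace_scaleR[of K y "-1"] csubspace_add[of K x "- y"] by simp

definition orth_compl :: "'a::complex_hilbert set \<Rightarrow> 'a set" where
  "orth_compl S = {u. \<forall>k\<in>S. cinner k u = 0}"

lemma csubspace_orth_compl: "csubspace (orth_compl S)"
  by (auto simp: csubspace_def orth_compl_def cinner_add_right cinner_scaleC_right)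

lemma parallelogram_law:
  "(norm (a + b::'a::complex_hilbert))\<^sup>2 + (norm (a - b))\<^sup>2 = 2 * (norm a)\<^sup>2 + 2 * (norm b)\<^sup>2"
  by (simp add: norm_add_sq norm_diff_sq)

text \<open>The parallelogram law applied to \<open>x - k\<close> and \<open>x - l\<close>, whose midpoint lies in \<open>K\<close>.\<close>
lemma norm_diff_sq_le_infdist:
  fixes x :: "'a::complex_hilbert"
  assumes K: "csubspace K" and k: "k \<in> K" and l: "l \<in> K"
  shows "(norm (k - l))\<^sup>2 \<le> 2 * (norm (x - k))\<^sup>2 + 2 * (norm (x - l))\<^sup>2 - 4 * (infdist x K)\<^sup>2"
proof -
  have "(1/2) *\<^sub>R (k + l) \<in> K" using K k l by (intro csubspace_scaleR csubspace_add)
  then have "infdist x K \<le> norm (x - (1/2) *\<^sub>R (k + l))"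
    using infdist_le[of _ K x] by (simp add: dist_norm)
  also have "\<dots> = norm ((x - k) + (x - l)) / 2"
  proof -
    have "(x - k) + (x - l) = 2 *\<^sub>R (x - (1/2) *\<^sub>R (k + l))"
      by (simp add: scaleR_diff_right scaleR_2)
    then show ?thesis by simp
  qed
  finally have "(2 * infdist x K)\<^sup>2 \<le> (norm ((x - k) + (x - l)))\<^sup>2"
    using infdist_nonneg[of x K] by (intro power_mono) auto
  moreover have "(x - k) - (x - l) = l - k" by simp
  ultimately show ?thesis
    using parallelogram_law[of "x - k" "x - l"] by (simp add: norm_minus_commute)
qed

lemma minimizing_sequence_Cauchy:
  fixes x :: "'a::complex_hilbert"
  assumes K: "csubspace K" and kK: "\<And>n. k n \<in> K"
    and lim: "(\<lambda>n. norm (x - k n)) \<longlonglongrightarrow> infdist x K"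
  shows "Cauchy k"
proof (rule metric_CauchyI)
  fix e :: real assume "e > 0"
  define d where "d = infdist x K"
  have "(\<lambda>n. (norm (x - k n))\<^sup>2) \<longlonglongrightarrow> d\<^sup>2" unfolding d_def by (intro tendsto_intros lim)
  then obtain N where N: "\<And>n. n \<ge> N \<Longrightarrow> \<bar>(norm (x - k n))\<^sup>2 - d\<^sup>2\<bar> < e\<^sup>2 / 4"
    using LIMSEQ_D[of _ "d\<^sup>2" "e\<^sup>2 / 4"] \<open>e > 0\<close> by (auto simp: dist_real_def)
  have "dist (k m) (k n) < e" if "m \<ge> N" "n \<ge> N" for m n
  proof -
    have "(dist (k m) (k n))\<^sup>2 < e\<^sup>2"
      using norm_diff_sq_le_infdist[OF K kK kK, of m n x] N[OF that(1)] N[OF that(2)]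
      unfolding dist_norm d_def abs_less_iff by linarith
    then show ?thesis using \<open>e > 0\<close> by (simp add: power_less_imp_less_base)
  qed
  then show "\<exists>N. \<forall>m\<ge>N. \<forall>n\<ge>N. dist (k m) (k n) < e" by blast
qed

lemma closed_csubspace_nearest_point:
  fixes x :: "'a::complex_hilbert"
  assumes K: "csubspace K" and cl: "closed K"
  obtains p where "p \<in> K" "\<And>q. q \<in> K \<Longrightarrow> norm (x - p) \<le> norm (x - q)"
proof -
  define d where "d = infdist x K"
  have d_le: "d \<le> norm (x - q)" if "q \<in> K" for q
    using infdist_le[OF that, of x] by (simp add: d_def dist_norm)
  have "\<exists>k\<in>K. norm (x - k) < d + 1 / Suc n" for n
  proof -
    have Kne: "K \<noteq> {}" using csubspace_zero[OF K] by blast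
    then have "(INF k\<in>K. dist x k) = d" by (simp add: d_def infdist_notempty)
    then have "(INF k\<in>K. dist x k) < d + 1 / Suc n" by simp
    then show ?thesis
      using Kne by (subst (asm) cINF_less_iff) (auto simp: dist_norm intro: bdd_belowI2[where m=0])
  qed
  then obtain k where kK: "\<And>n. k n \<in> K" and kd: "\<And>n. norm (x - k n) < d + 1 / Suc n"
    by metis
  have lim: "(\<lambda>n. norm (x - k n)) \<longlonglongrightarrow> d"
  proof (rule tendsto_sandwich[of "\<lambda>_. d" _ _ "\<lambda>n. d + 1 / Suc n"])
    show "(\<lambda>n. d + 1 / Suc n) \<longlonglongrightarrow> d"
      using tendsto_add[OF tendsto_const LIMSEQ_inverse_real_of_nat, of d]
      by (simp add: inverse_eq_divide)
    show "\<forall>\<^sub>F n in sequentially. norm (x - k n) \<le> d + 1 / Suc n"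
      using kd by (intro always_eventually allI less_imp_le)
  qed (use d_le kK in auto)
  then have "Cauchy k" unfolding d_def by (rule minimizing_sequence_Cauchy[OF K kK])
  then obtain p where kp: "k \<longlonglongrightarrow> p" by (auto simp: Cauchy_convergent_iff convergent_def)
  have "p \<in> K" using closed_sequentially[OF cl] kK kp by blast
  moreover have "norm (x - p) = d"
    by (rule LIMSEQ_unique[OF tendsto_norm[OF tendsto_diff[OF tendsto_const kp]] lim])
  ultimately show ?thesis using that d_le by force
qed

text \<open>Perturbing \<open>p\<close> along \<open>w\<close> and along \<open>\<i> w\<close> kills the real and imaginary part.\<close>
lemma nearest_point_orthogonal:
  fixes x :: "'a::complex_hilbert"
  assumes K: "csubspace K" and p: "p \<in> K"
    and nearest: "\<And>q. q \<in> K \<Longrightarrow> norm (x - p) \<le> norm (x - q)"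
  shows "x - p \<in> orth_compl K"
proof -
  define z where "z = x - p"
  have Re0: "Re (cinner z w) = 0" if w: "w \<in> K" for w
  proof (cases "w = 0")
    case False
    then have nw: "(norm w)\<^sup>2 > 0" by simp
    define a where "a = Re (cinner z w)"
    define t where "t = a / (norm w)\<^sup>2"
    have "p + t *\<^sub>R w \<in> K" using K p w by (intro csubspace_add csubspace_scaleR)
    then have "(norm z)\<^sup>2 \<le> (norm (z - t *\<^sub>R w))\<^sup>2"
      using nearest by (simp add: z_def diff_diff_eq power_mono)
    also have "\<dots> = (norm z)\<^sup>2 - 2 * t * a + t\<^sup>2 * (norm w)\<^sup>2"
      by (simp add: norm_diff_sq cinner_scaleR_right a_def power_mult_distrib)
    also have "\<dots> = (norm z)\<^sup>2 - a\<^sup>2 / (norm w)\<^sup>2"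
      using nw by (simp add: t_def power2_eq_square field_simps)
    finally have "a\<^sup>2 / (norm w)\<^sup>2 \<le> 0" by simp
    then show ?thesis using nw by (simp add: a_def divide_le_0_iff)
  qed simp
  have "cinner w z = 0" if w: "w \<in> K" for w
  proof -
    have "Re (cinner z w) = 0" "Re (cinner z (\<i> *\<^sub>C w)) = 0"
      using Re0 w csubspace_scaleC[OF K w] by auto
    then have "cinner z w = 0" by (simp add: cinner_scaleC_right complex_eq_iff)
    then show ?thesis by (subst cinner_cnj) simp
  qed
  then show ?thesis by (simp add: orth_compl_def z_def)
qed

lemma orthogonal_decomposition:
  fixes x :: "'a::complex_hilbert"
  assumes "csubspace K" "closed K"
  shows "\<exists>p. p \<in> K \<and> x - p \<in> orth_compl K"
  using closed_csubspace_nearest_point[OF assms] nearest_point_orthogonal[OF assms(1)] by metis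

definition proj :: "'a::complex_hilbert set \<Rightarrow> 'a \<Rightarrow> 'a" where
  "proj K x = (SOME p. p \<in> K \<and> x - p \<in> orth_compl K)"

context
  fixes K :: "'a::complex_hilbert set"
  assumes K: "csubspace K" and cl: "closed K"
begin

lemma proj_in: "proj K x \<in> K"
  and proj_orth: "x - proj K x \<in> orth_compl K"
  using someI_ex[OF orthogonal_decomposition[OF K cl, of x]] by (simp_all add: proj_def)

lemma proj_unique:
  assumes "p \<in> K" "x - p \<in> orth_compl K"
  shows "proj K x = p"
proof -
  have d: "proj K x - p \<in> K" using csubspace_diff[OF K proj_in assms(1)] .
  have "cinner (proj K x - p) ((x - p) - (x - proj K x)) = 0"
    using d assms(2) proj_orth[of x] by (simp add: orth_compl_def cinner_diff_right)
  then show ?thesis by (simp add: cinner_self_eq_zero)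
qed

lemma proj_id: "u \<in> K \<Longrightarrow> proj K u = u"
  by (rule proj_unique) (simp_all add: orth_compl_def)

lemma proj_eq_0_iff: "proj K x = 0 \<longleftrightarrow> x \<in> orth_compl K"
  using proj_unique[of 0 x] proj_orth[of x] csubspace_zero[OF K] by auto

lemma proj_add: "proj K (x + y) = proj K x + proj K y"
proof (rule proj_unique)
  show "proj K x + proj K y \<in> K" by (intro csubspace_add[OF K] proj_in)
  have "x + y - (proj K x + proj K y) = (x - proj K x) + (y - proj K y)" by simp
  then show "x + y - (proj K x + proj K y) \<in> orth_compl K"
    using proj_orth csubspace_add[OF csubspace_orth_compl] by metis
qed

lemma proj_scaleC: "proj K (c *\<^sub>C x) = c *\<^sub>C proj K x"
proof (rule proj_unique)
  show "c *\<^sub>C proj K x \<in> K" by (intro csubspace_scaleC[OF K] proj_in)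
  show "c *\<^sub>C x - c *\<^sub>C proj K x \<in> orth_compl K"
    using csubspace_scaleC[OF csubspace_orth_compl proj_orth] by (simp add: scaleC_diff_right)
qed

lemma cinner_proj: "cinner x (proj K y) = cinner (proj K x) (proj K y)"
proof -
  have "cinner (proj K y) (x - proj K x) = 0" using proj_orth proj_in by (simp add: orth_compl_def)
  then have "cinner (x - proj K x) (proj K y) = 0" by (subst cinner_cnj) simp
  then show ?thesis by (simp add: cinner_diff_left)
qed

lemma norm_proj_le: "norm (proj K x) \<le> norm x"
proof -
  have "cinner (proj K x) (x - proj K x) = 0" using proj_orth proj_in by (simp add: orth_compl_def)
  then have "(norm x)\<^sup>2 = (norm (proj K x))\<^sup>2 + (norm (x - proj K x))\<^sup>2"
    using norm_add_Pythagorean[of "proj K x" "x - proj K x"] by simp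
  then have "(norm (proj K x))\<^sup>2 \<le> (norm x)\<^sup>2" by simp
  then show ?thesis by (rule power2_le_imp_le) simp
qed

end


section \<open>Bounded operators and adjoints\<close>

lemma bounded_op_linear: "bounded_op T \<Longrightarrow> bounded_linear T"
  by (simp add: bounded_op_def)

lemma bounded_op_scaleC: "bounded_op T \<Longrightarrow> T (c *\<^sub>C x) = c *\<^sub>C T x"
  by (simp add: bounded_op_def)

lemma bounded_op_add: "bounded_op T \<Longrightarrow> T (x + y) = T x + T y"
  and bounded_op_diff: "bounded_op T \<Longrightarrow> T (x - y) = T x - T y"
  and bounded_op_zero: "bounded_op T \<Longrightarrow> T 0 = 0"
  and bounded_op_scaleR: "bounded_op T \<Longrightarrow> T (r *\<^sub>R x) = r *\<^sub>R T x"
  by (simp_all add: bounded_op_def linear_simps)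

lemma bounded_op_norm_le: "bounded_op T \<Longrightarrow> norm (T x) \<le> onorm T * norm x"
  by (rule onorm) (simp add: bounded_op_def)

lemma bounded_op_onorm_nonneg: "bounded_op T \<Longrightarrow> 0 \<le> onorm T"
  by (rule onorm_pos_le) (simp add: bounded_op_def)

lemma bounded_op_ident: "bounded_op (\<lambda>x. x)"
  by (simp add: bounded_op_def bounded_linear_ident)

lemma bounded_op_compose: "bounded_op S \<Longrightarrow> bounded_op T \<Longrightarrow> bounded_op (\<lambda>x. S (T x))"
  unfolding bounded_op_def using bounded_linear_compose[of S T] by (simp add: o_def)

lemma bounded_op_diff_op: "bounded_op S \<Longrightarrow> bounded_op T \<Longrightarrow> bounded_op (\<lambda>x. S x - T x)"
  unfolding bounded_op_def by (auto intro: bounded_linear_sub simp: scaleC_diff_right)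

lemma bounded_op_scaleR_op: "bounded_op S \<Longrightarrow> bounded_op (\<lambda>x. r *\<^sub>R S x)"
  unfolding bounded_op_def
  by (auto intro: bounded_linear_compose[OF bounded_linear_scaleR_right, of S, simplified o_def]
      simp: scaleC_scaleR)

lemma bounded_op_funpow: "bounded_op f \<Longrightarrow> bounded_op (f ^^ n)"
  by (induction n)
     (simp_all add: bounded_op_ident[folded id_def] bounded_op_compose[folded comp_def])

text \<open>The functional is determined by a vector \<open>u\<close> orthogonal to its kernel.\<close>
lemma Riesz_representation:
  fixes g :: "'a::complex_hilbert \<Rightarrow> complex"
  assumes g: "bounded_linear g" and g_scaleC: "\<And>c x. g (c *\<^sub>C x) = c * g x"
  shows "\<exists>w. \<forall>x. g x = cinner w x"
proof (cases "\<forall>x. g x = 0")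
  case False
  then obtain x0 where gx0: "g x0 \<noteq> 0" by blast
  define K where "K = {x. g x = 0}"
  have lin: "g (x + y) = g x + g y" "g (x - y) = g x - g y" "g 0 = 0" for x y
    using g by (simp_all add: linear_simps)
  have "csubspace K" unfolding csubspace_def K_def using lin g_scaleC by auto
  moreover have "closed K" unfolding K_def
    by (intro closed_Collect_eq linear_continuous_on g continuous_on_const)
  ultimately obtain p where pK: "p \<in> K" and orth: "x0 - p \<in> orth_compl K"
    using orthogonal_decomposition by blast
  define u where "u = x0 - p"
  have gu: "g u \<noteq> 0" using gx0 pK by (simp add: u_def lin K_def)
  then have nu: "(norm u)\<^sup>2 \<noteq> 0" using lin by auto
  have "g x = cinner ((cnj (g u) / of_real ((norm u)\<^sup>2)) *\<^sub>C u) x" for x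
  proof -
    define v where "v = x - (g x / g u) *\<^sub>C u"
    have "g v = 0" using gu by (simp add: v_def lin g_scaleC)
    then have "cinner v u = 0" using orth by (simp add: K_def u_def orth_compl_def)
    then have "cinner u x = (g x / g u) * of_real ((norm u)\<^sup>2)"
      by (subst cinner_cnj) (simp add: v_def cinner_diff_left cinner_scaleC_left cinner_self)
    then show ?thesis using gu nu by (simp add: cinner_scaleC_left field_simps)
  qed
  then show ?thesis by blast
qed (auto intro: exI[of _ 0])

lemma adj_exists:
  assumes T: "bounded_op T"
  shows "\<exists>S. \<forall>x y. cinner (T x) y = cinner x (S y)"
proof -
  have "\<exists>w. \<forall>x. cinner y (T x) = cinner w x" for y
  proof (rule Riesz_representation)
    show "bounded_linear (\<lambda>x. cinner y (T x))"
      using bounded_linear_compose[OF bounded_linear_cinner_right bounded_op_linear[OF T]]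
      by (simp add: o_def)
  qed (simp add: bounded_op_scaleC[OF T] cinner_scaleC_right)
  then have "\<forall>y. \<exists>w. \<forall>x. cinner (T x) y = cinner x w" by (metis cinner_cnj)
  then show ?thesis by metis
qed

lemma adj_eqI:
  assumes "\<And>x y. cinner (T x) y = cinner x (S y)"
  shows "adj T = S"
  unfolding adj_def
proof (rule the_equality)
  fix S' assume "\<forall>x y. cinner (T x) y = cinner x (S' y)"
  then show "S' = S" using assms by (metis cinner_ext ext)
qed (use assms in blast)

lemma cinner_adj_right: "bounded_op T \<Longrightarrow> cinner (T x) y = cinner x (adj T y)"
  using adj_exists adj_eqI by metis

lemma cinner_adj_left: "bounded_op T \<Longrightarrow> cinner x (T y) = cinner (adj T x) y"
  by (metis cinner_adj_right cinner_cnj)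

lemma bounded_op_adj:
  assumes T: "bounded_op T"
  shows "bounded_op (adj T)"
proof -
  let ?S = "adj T"
  have add: "?S (y1 + y2) = ?S y1 + ?S y2" for y1 y2
    by (rule cinner_ext) (simp add: cinner_adj_right[OF T, symmetric] cinner_add_right)
  have scale: "?S (c *\<^sub>C y) = c *\<^sub>C ?S y" for c y
    by (rule cinner_ext) (simp add: cinner_adj_right[OF T, symmetric] cinner_scaleC_right)
  have bound: "norm (?S y) \<le> norm y * onorm T" for y
  proof -
    have "(norm (?S y))\<^sup>2 = Re (cinner (T (?S y)) y)"
      by (simp add: cinner_adj_right[OF T] Re_cinner_self)
    also have "\<dots> \<le> norm (T (?S y)) * norm y" by (rule Re_cinner_le)
    also have "\<dots> \<le> onorm T * norm (?S y) * norm y"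
      by (intro mult_right_mono bounded_op_norm_le[OF T]) simp
    finally have "norm (?S y) * norm (?S y) \<le> (onorm T * norm y) * norm (?S y)"
      by (simp add: power2_eq_square algebra_simps)
    then show ?thesis
      by (cases "norm (?S y) = 0") (auto simp: mult.commute bounded_op_onorm_nonneg[OF T])
  qed
  have "bounded_linear ?S"
    by (rule bounded_linear_intro[OF add _ bound]) (metis scale scaleC_of_real)
  then show ?thesis using scale by (simp add: bounded_op_def)
qed

section \<open>Self-adjoint and positive operators\<close>

definition selfadj :: "('a::complex_hilbert \<Rightarrow> 'a) \<Rightarrow> bool" where
  "selfadj H \<longleftrightarrow> bounded_op H \<and> (\<forall>x y. cinner (H x) y = cinner x (H y))"

definition invariant :: "('a::complex_hilbert \<Rightarrow> 'a) \<Rightarrow> 'a set \<Rightarrow> bool" where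
  "invariant D M \<longleftrightarrow> csubspace M \<and> (\<forall>v\<in>M. D v \<in> M)"

lemma invariant_UNIV: "invariant D UNIV"
  by (simp add: invariant_def csubspace_def)

lemma selfadj_bounded_op: "selfadj H \<Longrightarrow> bounded_op H"
  by (simp add: selfadj_def)

lemma selfadj_cinner: "selfadj H \<Longrightarrow> cinner (H x) y = cinner x (H y)"
  by (simp add: selfadj_def)

lemma selfadj_cinner_real: "selfadj H \<Longrightarrow> cinner x (H x) = of_real (Re (cinner x (H x)))"
  by (metis selfadj_cinner cinner_cnj Reals_cnj_iff complex_is_Real_iff of_real_Re)

lemma selfadj_diff_op: "selfadj A \<Longrightarrow> selfadj B \<Longrightarrow> selfadj (\<lambda>x. A x - B x)"
  by (simp add: selfadj_def bounded_op_diff_op cinner_diff_left cinner_diff_right)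

lemma selfadj_scaleR_op: "selfadj A \<Longrightarrow> selfadj (\<lambda>x. r *\<^sub>R A x)"
  by (simp add: selfadj_def bounded_op_scaleR_op cinner_scaleR_left cinner_scaleR_right)

lemma selfadj_ident: "selfadj (\<lambda>x. x)"
  by (simp add: selfadj_def bounded_op_ident)

lemma selfadj_funpow:
  assumes "selfadj f"
  shows "selfadj (f ^^ n)"
proof -
  have "cinner ((f ^^ n) x) y = cinner x ((f ^^ n) y)" for x y
    by (induction n arbitrary: x y) (simp_all add: selfadj_cinner[OF assms] funpow_swap1)
  then show ?thesis
    using bounded_op_funpow[OF selfadj_bounded_op[OF assms]] by (simp add: selfadj_def)
qed

lemma selfadj_adj_compose: "bounded_op T \<Longrightarrow> selfadj (\<lambda>x. adj T (T x))"
  by (simp add: selfadj_def bounded_op_compose bounded_op_adj cinner_adj_right cinner_adj_left)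

text \<open>The sesquilinear form \<open>\<langle>x, P y\<rangle> - \<langle>P x, y\<rangle>\<close> vanishes on the diagonal, hence
by polarization everywhere; this uses that the scalars are complex.\<close>
lemma positive_op_selfadj:
  assumes P: "positive_op P"
  shows "selfadj P"
proof -
  have bP: "bounded_op P" using P by (simp add: positive_op_def)
  define h where "h x y = cinner x (P y) - cinner (P x) y" for x y
  have diag: "h x x = 0" for x
    using P by (simp add: h_def positive_op_def cinner_cnj[of "P x" x] complex_eq_iff)
  have h_add: "h (x + y) (x + y) = h x x + h x y + h y x + h y y" for x y
    by (simp add: h_def bounded_op_add[OF bP] cinner_add_left cinner_add_right)
  have "h x y = 0" for x y
  proof -
    have 1: "h x y + h y x = 0" using h_add[of x y] diag by simp
    have "h x (\<i> *\<^sub>C y) + h (\<i> *\<^sub>C y) x = 0" using h_add[of x "\<i> *\<^sub>C y"] diag by simp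
    then have "\<i> * (h x y - h y x) = 0"
      by (simp add: h_def bounded_op_scaleC[OF bP] cinner_scaleC_left cinner_scaleC_right
          algebra_simps)
    with 1 show ?thesis by simp
  qed
  then show ?thesis unfolding selfadj_def h_def using bP by simp
qed

lemma selfadj_polarization_bound:
  assumes D: "selfadj D" and M: "csubspace M"
    and r: "\<And>v. v \<in> M \<Longrightarrow> \<bar>Re (cinner v (D v))\<bar> \<le> r * (norm v)\<^sup>2"
    and x: "x \<in> M" and y: "y \<in> M"
  shows "4 * Re (cinner x (D y)) \<le> 2 * r * ((norm x)\<^sup>2 + (norm y)\<^sup>2)"
proof -
  have bD: "bounded_op D" using D by (simp add: selfadj_def)
  have e: "cinner (x + y) (D (x + y)) - cinner (x - y) (D (x - y))
      = 2 * cinner x (D y) + 2 * cinner y (D x)"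
    by (simp add: bounded_op_add[OF bD] bounded_op_diff[OF bD] cinner_add_left cinner_add_right
        cinner_diff_left cinner_diff_right algebra_simps)
  have "Re (cinner y (D x)) = Re (cinner x (D y))"
    using selfadj_cinner[OF D, of y x] Re_cinner_commute[of x "D y"] by simp
  then have "4 * Re (cinner x (D y))
      = Re (cinner (x + y) (D (x + y))) - Re (cinner (x - y) (D (x - y)))"
    using arg_cong[OF e, of Re] by simp
  also have "\<dots> \<le> r * (norm (x + y))\<^sup>2 + r * (norm (x - y))\<^sup>2"
    using abs_le_D1[OF r[OF csubspace_add[OF M x y]]] abs_le_D2[OF r[OF csubspace_diff[OF M x y]]]
    by linarith
  also have "\<dots> = r * ((norm (x + y))\<^sup>2 + (norm (x - y))\<^sup>2)"
    by (simp only: distrib_left)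
  also have "\<dots> = 2 * r * ((norm x)\<^sup>2 + (norm y)\<^sup>2)"
    by (simp only: parallelogram_law) (simp add: algebra_simps)
  finally show ?thesis .
qed

text \<open>Apply the polarization bound with \<open>x\<close> parallel to \<open>D u\<close> and of the same length as \<open>u\<close>.\<close>
lemma selfadj_norm_le_quadratic_bound:
  assumes D: "selfadj D" and M: "invariant D M"
    and r: "\<And>v. v \<in> M \<Longrightarrow> \<bar>Re (cinner v (D v))\<bar> \<le> r * (norm v)\<^sup>2"
    and u: "u \<in> M"
  shows "norm (D u) \<le> r * norm u"
proof (cases "D u = 0")
  case True
  have "0 \<le> r * (norm u)\<^sup>2" using r[OF u] by (meson abs_ge_zero order_trans)
  then have "0 \<le> r * norm u"
    by (cases "u = 0") (simp_all add: zero_le_mult_iff)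
  then show ?thesis using True by simp
next
  case False
  have csM: "csubspace M" and DM: "D u \<in> M" using M u by (simp_all add: invariant_def)
  define x where "x = (norm u / norm (D u)) *\<^sub>R D u"
  have "x \<in> M" unfolding x_def using csubspace_scaleR[OF csM DM] .
  moreover have "norm x = norm u" using False by (simp add: x_def)
  moreover have "Re (cinner x (D u)) = norm u * norm (D u)"
    using False by (simp add: x_def cinner_scaleR_left Re_cinner_self power2_eq_square)
  ultimately have "norm u * norm (D u) \<le> norm u * (r * norm u)"
    using selfadj_polarization_bound[OF D csM r _ u, of x]
    by (simp add: power2_eq_square algebra_simps)
  then show ?thesis
    using False bounded_op_zero[OF selfadj_bounded_op[OF D]] by (cases "u = 0") auto
qed

text \<open>Evaluate the quadratic form at \<open>x - C x / \<parallel>C\<parallel>\<close>.\<close>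
lemma positive_norm_sq_le:
  assumes C: "selfadj C" and M: "invariant C M"
    and pos: "\<And>v. v \<in> M \<Longrightarrow> 0 \<le> Re (cinner v (C v))"
    and x: "x \<in> M"
  shows "(norm (C x))\<^sup>2 \<le> onorm C * Re (cinner x (C x))"
proof -
  have bC: "bounded_op C" using C by (simp add: selfadj_def)
  define K where "K = onorm C"
  define a where "a = (norm (C x))\<^sup>2"
  define q where "q = Re (cinner x (C x))"
  show ?thesis
  proof (cases "K = 0")
    case True
    then show ?thesis using bounded_op_norm_le[OF bC, of x] by (simp add: K_def)
  next
    case False
    then have Kp: "K > 0" using bounded_op_onorm_nonneg[OF bC] by (simp add: K_def)
    have CCx: "Re (cinner (C x) (C (C x))) \<le> K * a"
      using Re_cinner_le[of "C x" "C (C x)"] bounded_op_norm_le[OF bC, of "C x"]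
        mult_left_mono[of _ _ "norm (C x)"]
      by (force simp: K_def a_def power2_eq_square algebra_simps)
    define t where "t = 1 / K"
    have "x - t *\<^sub>R C x \<in> M"
      using M x by (auto simp: invariant_def intro: csubspace_diff csubspace_scaleR)
    then have "0 \<le> Re (cinner (x - t *\<^sub>R C x) (C (x - t *\<^sub>R C x)))" by (rule pos)
    also have "\<dots> = q - 2 * t * a + t\<^sup>2 * Re (cinner (C x) (C (C x)))"
      by (simp add: bounded_op_diff[OF bC] bounded_op_scaleR[OF bC] cinner_diff_left
          cinner_diff_right cinner_scaleR_left cinner_scaleR_right selfadj_cinner[OF C, of x "C
            x", symmetric]
          q_def a_def Re_cinner_self power2_eq_square algebra_simps)
    also have "\<dots> \<le> q - 2 * t * a + t\<^sup>2 * (K * a)"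
      using CCx by (intro add_left_mono mult_left_mono) auto
    also have "\<dots> = q - a / K" using Kp by (simp add: t_def power2_eq_square field_simps)
    finally show ?thesis using Kp by (simp add: a_def q_def K_def field_simps)
  qed
qed

section \<open>Square roots of positive operators\<close>

lemma has_sum_bounded_bilinear_product:
  fixes a :: "nat \<Rightarrow> 'a::banach" and b :: "nat \<Rightarrow> 'b::banach"
    and prod :: "'a \<Rightarrow> 'b \<Rightarrow> 'c::banach"
  assumes prod: "bounded_bilinear prod"
    and a: "summable (\<lambda>k. norm (a k))" and b: "summable (\<lambda>k. norm (b k))"
  shows "((\<lambda>(i, j). prod (a i) (b j)) has_sum prod (\<Sum>k. a k) (\<Sum>k. b k)) (UNIV \<times> UNIV)"
proof -
  obtain K where K: "\<And>x y. norm (prod x y) \<le> norm x * norm y * K"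
    using bounded_bilinear.bounded[OF prod] by blast
  have ha: "(a has_sum (\<Sum>k. a k)) UNIV"
    using norm_summable_imp_has_sum[OF a summable_sums[OF summable_norm_cancel[OF a]]] .
  have hb: "(b has_sum (\<Sum>k. b k)) UNIV"
    using norm_summable_imp_has_sum[OF b summable_sums[OF summable_norm_cancel[OF b]]] .
  have na: "(\<lambda>i. norm (a i)) summable_on UNIV" and nb: "(\<lambda>j. norm (b j)) summable_on UNIV"
    using a b by (simp_all add: summable_on_UNIV_nonneg_real_iff)
  define g where "g = (\<lambda>(i, j). K * (norm (a i) * norm (b j)))"
  have "(\<lambda>x. norm (g x)) summable_on UNIV \<times> UNIV"
    by (rule Infinite_Sum.abs_summable_on_Sigma_iff[THEN iffD2])
       (auto simp: g_def abs_mult infsum_cmult_right'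
         intro!: summable_on_cmult_right summable_on_cmult_left na nb)
  then have summable: "(\<lambda>(i, j). prod (a i) (b j)) summable_on UNIV \<times> UNIV"
    by (rule Infinite_Sum.abs_summable_summable[OF Infinite_Sum.abs_summable_on_comparison_test])
       (auto simp: g_def intro: order_trans[OF K] simp: mult_ac)
  have rows: "((\<lambda>i. prod (a i) (\<Sum>k. b k)) has_sum prod (\<Sum>k. a k) (\<Sum>k. b k)) UNIV"
    by (rule has_sum_bounded_linear[OF bounded_bilinear.bounded_linear_left[OF prod] ha])
  show ?thesis
    by (rule has_sum_SigmaI[OF _ rows summable])
       (simp add: has_sum_bounded_linear[OF bounded_bilinear.bounded_linear_right[OF prod] hb])
qed

lemma has_sum_antidiagonals:
  fixes f :: "nat \<times> nat \<Rightarrow> 'a::{topological_comm_monoid_add, t3_space}"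
  assumes "(f has_sum S) (UNIV \<times> UNIV)"
  shows "((\<lambda>k. \<Sum>i\<le>k. f (i, k - i)) has_sum S) UNIV"
proof -
  define h where "h = (\<lambda>(k, i). (i, k - i :: nat))"
  have "h ` (SIGMA k:UNIV. {..k}) = UNIV \<times> UNIV"
  proof -
    have "(i, j) \<in> h ` (SIGMA k:UNIV. {..k})" for i j
      by (rule rev_image_eqI[of "(i + j, i)"]) (auto simp: h_def)
    then show ?thesis by auto
  qed
  moreover have "inj_on h (SIGMA k:UNIV. {..k})"
    by (auto simp: h_def inj_on_def)
  ultimately have "((f \<circ> h) has_sum S) (SIGMA k:UNIV. {..k})"
    using assms has_sum_reindex by metis
  moreover have "f \<circ> h = (\<lambda>(k, i). f (i, k - i))"
    by (auto simp: h_def)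
  ultimately have "((\<lambda>(k, i). f (i, k - i)) has_sum S) (SIGMA k:UNIV. {..k})"
    by simp
  then show ?thesis by (rule has_sum_SigmaD) (simp_all add: has_sum_finite)
qed

lemma Cauchy_product_sums_bounded_bilinear:
  fixes a :: "nat \<Rightarrow> 'a::banach" and b :: "nat \<Rightarrow> 'b::banach"
    and prod :: "'a \<Rightarrow> 'b \<Rightarrow> 'c::banach"
  assumes "bounded_bilinear prod"
    and "summable (\<lambda>k. norm (a k))" and "summable (\<lambda>k. norm (b k))"
  shows "(\<lambda>k. \<Sum>i\<le>k. prod (a i) (b (k - i))) sums prod (\<Sum>k. a k) (\<Sum>k. b k)"
  using has_sum_antidiagonals[OF has_sum_bounded_bilinear_product[OF assms]]
  by (simp add: has_sum_imp_sums)

text \<open>The Taylor coefficients of \<open>y(t) = 1 - \<surd>(1 - t)\<close>, determined by \<open>y\<^sup>2 = 2 y - t\<close>.\<close>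
fun sqrt_coeff :: "nat \<Rightarrow> real" where
  "sqrt_coeff 0 = 0"
| "sqrt_coeff (Suc 0) = 1/2"
| "sqrt_coeff (Suc (Suc n)) =
     (1/2) * (\<Sum>i\<in>{1..Suc n}. sqrt_coeff i * sqrt_coeff (Suc (Suc n) - i))"

lemma sqrt_coeff_nonneg: "0 \<le> sqrt_coeff n"
proof (induction n rule: less_induct)
  case (less n)
  show ?case
  proof (cases n rule: sqrt_coeff.cases)
    case (3 m)
    have "0 \<le> (\<Sum>i\<in>{1..Suc m}. sqrt_coeff i * sqrt_coeff (Suc (Suc m) - i))"
      using less 3 by (intro sum_nonneg mult_nonneg_nonneg) auto
    then show ?thesis using 3 by simp
  qed simp_all
qed

lemma sqrt_coeff_convolution:
  "(\<Sum>i\<le>n. sqrt_coeff i * sqrt_coeff (n - i)) = 2 * sqrt_coeff n - (if n = 1 then 1 else 0)"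
proof (cases n rule: sqrt_coeff.cases)
  case (3 m)
  have "(\<Sum>i\<le>n. sqrt_coeff i * sqrt_coeff (n - i))
      = (\<Sum>i\<in>{1..Suc m}. sqrt_coeff i * sqrt_coeff (n - i))"
  proof (rule sum.mono_neutral_right)
    show "\<forall>i\<in>{..n} - {1..Suc m}. sqrt_coeff i * sqrt_coeff (n - i) = 0"
    proof
      fix i assume "i \<in> {..n} - {1..Suc m}"
      then have "i = 0 \<or> i = n" using 3 by auto
      then show "sqrt_coeff i * sqrt_coeff (n - i) = 0" by auto
    qed
  qed (use 3 in auto)
  then show ?thesis using 3 by simp
qed simp_all

text \<open>The convolution identity gives \<open>s\<^sub>N \<le> (s\<^sub>N\<^sub>-\<^sub>1\<^sup>2 + 1) / 2\<close> for the partial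
sums, so they stay below \<open>1\<close>.\<close>
lemma sqrt_coeff_partial_sum_le: "(\<Sum>k\<le>N. sqrt_coeff k) \<le> 1"
proof (induction N rule: less_induct)
  case (less N)
  show ?case
  proof (cases N)
    case (Suc M)
    have tri: "(\<Sum>n\<le>N. \<Sum>i\<le>n. sqrt_coeff i * sqrt_coeff (n - i)) \<le> (\<Sum>k\<le>M. sqrt_coeff k)\<^sup>2"
    proof -
      have "(\<Sum>n\<le>N. \<Sum>i\<le>n. sqrt_coeff i * sqrt_coeff (n - i))
          = (\<Sum>(i,j)\<in>{(i,j). i + j \<le> N}. sqrt_coeff i * sqrt_coeff j)"
        by (rule sum.triangle_reindex_eq[symmetric])
      also have "\<dots> = (\<Sum>(i,j)\<in>{(i,j). i + j \<le> N \<and> 0 < i \<and> 0 < j}. sqrt_coeff i * sqrt_coeff j)"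
      proof (rule sum.mono_neutral_right)
        have "{(i,j). i + j \<le> N} \<subseteq> {..N} \<times> {..N}" by auto
        then show "finite {(i,j). i + j \<le> N}" by (rule finite_subset) auto
      qed (auto intro!: gr0I)
      also have "\<dots> \<le> (\<Sum>(i,j)\<in>{..M} \<times> {..M}. sqrt_coeff i * sqrt_coeff j)"
        by (rule sum_mono2) (auto simp: Suc sqrt_coeff_nonneg)
      also have "\<dots> = (\<Sum>k\<le>M. sqrt_coeff k)\<^sup>2"
        by (simp add: sum_product sum.cartesian_product power2_eq_square)
      finally show ?thesis .
    qed
    have "(\<Sum>k\<le>N. sqrt_coeff k) = (\<Sum>k\<le>N. (1/2) * (\<Sum>i\<le>k. sqrt_coeff i * sqrt_coeff (k - i))
        + (1/2) * (if k = 1 then 1 else 0))"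
      by (intro sum.cong refl) (simp add: sqrt_coeff_convolution)
    also have "\<dots> = (1/2) * (\<Sum>k\<le>N. \<Sum>i\<le>k. sqrt_coeff i * sqrt_coeff (k - i))
        + (1/2) * (\<Sum>k\<le>N. (if k = 1 then 1 else 0))"
      by (simp only: sum.distrib sum_distrib_left)
    also have "(\<Sum>k\<le>N. (if k = 1 then 1 else 0::real)) = 1"
      using Suc by (simp add: sum.delta)
    finally have "(\<Sum>k\<le>N. sqrt_coeff k) \<le> (1/2) * (\<Sum>k\<le>M. sqrt_coeff k)\<^sup>2 + 1/2"
      using tri by simp
    moreover have "(\<Sum>k\<le>M. sqrt_coeff k)\<^sup>2 \<le> 1"
      using less[of M] Suc sum_nonneg[of "{..M}" sqrt_coeff] sqrt_coeff_nonneg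
      by (simp add: power_le_one)
    ultimately show ?thesis by simp
  qed simp
qed

lemma sqrt_coeff_partial_sum_lessThan_le: "sum sqrt_coeff {..<n} \<le> 1"
  using sqrt_coeff_partial_sum_le[of "n - 1"] sqrt_coeff_nonneg
  by (cases n) (simp_all add: lessThan_Suc_atMost)

lemma summable_sqrt_coeff: "summable sqrt_coeff"
  by (rule summableI_nonneg_bounded[OF sqrt_coeff_nonneg sqrt_coeff_partial_sum_lessThan_le])

lemma suminf_sqrt_coeff_le: "suminf sqrt_coeff \<le> 1"
  by (rule suminf_le_const[OF summable_sqrt_coeff sqrt_coeff_partial_sum_lessThan_le])

text \<open>For \<open>0 \<le> A\<close> put \<open>B = 1 - A / c\<close> with \<open>c > \<parallel>A\<parallel>\<close>, so that \<open>\<parallel>B\<parallel> \<le> 1\<close>. The series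
\<open>Y = \<Sum> sqrt_coeff k B\<^sup>k\<close> satisfies \<open>Y\<^sup>2 = 2 Y - B\<close>, hence \<open>(\<surd>c (1 - Y))\<^sup>2 = A\<close>.\<close>
context
  fixes A :: "'a::complex_hilbert \<Rightarrow> 'a"
  assumes A_selfadj: "selfadj A" and A_nonneg: "\<And>x. 0 \<le> Re (cinner x (A x))"
begin

private definition "c = onorm A + 1"
private definition "B x = x - (1 / c) *\<^sub>R A x"

private lemma c_pos: "c > 0"
  using bounded_op_onorm_nonneg[OF selfadj_bounded_op[OF A_selfadj]] by (simp add: c_def)

private lemma B_selfadj: "selfadj B"
  unfolding B_def[abs_def] by (intro selfadj_diff_op selfadj_ident selfadj_scaleR_op A_selfadj)

private lemma bounded_op_B_funpow: "bounded_op (B ^^ k)"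
  by (intro bounded_op_funpow selfadj_bounded_op B_selfadj)

private lemma norm_B_funpow_le: "norm ((B ^^ k) x) \<le> norm x"
proof -
  have "\<bar>Re (cinner x (B x))\<bar> \<le> 1 * (norm x)\<^sup>2" for x
  proof -
    have "Re (cinner x (A x)) \<le> norm x * (onorm A * norm x)"
      using Re_cinner_le[of x "A x"] bounded_op_norm_le[OF selfadj_bounded_op[OF A_selfadj], of x]
      by (meson mult_left_mono norm_ge_zero order_trans)
    also have "\<dots> \<le> c * (norm x)\<^sup>2" by (simp add: c_def power2_eq_square algebra_simps)
    finally have "Re (cinner x (A x)) / c \<le> (norm x)\<^sup>2" using c_pos by (simp add: field_simps)
    moreover have "0 \<le> Re (cinner x (A x)) / c" using A_nonneg[of x] c_pos by simp
    moreover have "Re (cinner x (B x)) = (norm x)\<^sup>2 - Re (cinner x (A x)) / c"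
      by (simp add: B_def cinner_diff_right cinner_scaleR_right Re_cinner_self)
    ultimately show ?thesis by simp
  qed
  then have "norm (B x) \<le> 1 * norm x" for x
    by (rule selfadj_norm_le_quadratic_bound[OF B_selfadj invariant_UNIV]) simp_all
  then show ?thesis by (induction k) (auto intro: order_trans)
qed

private definition "B_pow k = Blinfun (B ^^ k)"

private lemma B_pow_apply: "blinfun_apply (B_pow k) = B ^^ k"
  using bounded_op_B_funpow[of k]
  by (simp add: B_pow_def bounded_op_def bounded_linear_Blinfun_apply)

private lemma summable_norm_Y_terms: "summable (\<lambda>k. norm (sqrt_coeff k *\<^sub>R B_pow k))"
proof (rule summable_comparison_test'[OF summable_sqrt_coeff])
  have "norm (B_pow n) \<le> 1" for n
    by (rule norm_blinfun_bound) (auto simp: B_pow_apply norm_B_funpow_le)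
  then show "norm (norm (sqrt_coeff n *\<^sub>R B_pow n)) \<le> sqrt_coeff n" for n
    using sqrt_coeff_nonneg[of n] by (simp add: mult_left_le)
qed

private definition "Y_blinfun = (\<Sum>k. sqrt_coeff k *\<^sub>R B_pow k)"

private lemma Y_blinfun_square: "Y_blinfun o\<^sub>L Y_blinfun = 2 *\<^sub>R Y_blinfun - B_pow 1"
proof -
  have "(\<lambda>k. \<Sum>i\<le>k. (sqrt_coeff i *\<^sub>R B_pow i) o\<^sub>L (sqrt_coeff (k - i) *\<^sub>R B_pow (k - i)))
      sums (Y_blinfun o\<^sub>L Y_blinfun)"
    unfolding Y_blinfun_def
    by (rule Cauchy_product_sums_bounded_bilinear[OF bounded_bilinear_blinfun_compose
          summable_norm_Y_terms summable_norm_Y_terms])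
  moreover have "(\<Sum>i\<le>k. (sqrt_coeff i *\<^sub>R B_pow i) o\<^sub>L (sqrt_coeff (k - i) *\<^sub>R B_pow (k - i)))
      = 2 *\<^sub>R (sqrt_coeff k *\<^sub>R B_pow k) - (if k = 1 then B_pow k else 0)" for k
  proof -
    have "B_pow i o\<^sub>L B_pow (k - i) = B_pow k" if "i \<le> k" for i
      using that by (intro blinfun_eqI) (metis B_pow_apply blinfun_apply_blinfun_compose
          funpow_add comp_apply le_add_diff_inverse)
    then have "(\<Sum>i\<le>k. (sqrt_coeff i *\<^sub>R B_pow i) o\<^sub>L (sqrt_coeff (k - i) *\<^sub>R B_pow (k - i)))
        = (\<Sum>i\<le>k. sqrt_coeff i * sqrt_coeff (k - i)) *\<^sub>R B_pow k"
      by (simp add: bounded_bilinear.scaleR_left[OF bounded_bilinear_blinfun_compose]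
          bounded_bilinear.scaleR_right[OF bounded_bilinear_blinfun_compose] scaleR_sum_left
          mult.commute)
    then show ?thesis
      by (simp only: sqrt_coeff_convolution) (cases "k = 1"; simp add: scaleR_diff_left)
  qed
  moreover have "(\<lambda>k. 2 *\<^sub>R (sqrt_coeff k *\<^sub>R B_pow k) - (if k = 1 then B_pow k else 0))
      sums (2 *\<^sub>R Y_blinfun - B_pow 1)"
    unfolding Y_blinfun_def
    by (rule sums_diff[OF bounded_linear.sums[OF bounded_linear_scaleR_right
          summable_sums[OF summable_norm_cancel[OF summable_norm_Y_terms]]] sums_single])
  ultimately show ?thesis by (simp add: sums_unique2)
qed

private definition "Y = blinfun_apply Y_blinfun"

private lemma Y_sums: "(\<lambda>k. sqrt_coeff k *\<^sub>R (B ^^ k) x) sums Y x"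
  using bounded_linear.sums[OF blinfun.bounded_linear_left
      summable_sums[OF summable_norm_cancel[OF summable_norm_Y_terms]], of x]
  by (simp add: Y_def Y_blinfun_def B_pow_apply blinfun.scaleR_left)

private lemma bounded_linear_Y: "bounded_linear Y"
  by (simp add: Y_def blinfun.bounded_linear_right)

private lemma Y_Y: "Y (Y x) = 2 *\<^sub>R Y x - B x"
  using arg_cong[OF Y_blinfun_square, of "\<lambda>F. blinfun_apply F x"]
  by (simp add: Y_def blinfun.diff_left blinfun.scaleR_left B_pow_apply)

private lemma Y_commute:
  assumes Q: "bounded_op Q" and QA: "\<And>x. Q (A x) = A (Q x)"
  shows "Q (Y x) = Y (Q x)"
proof -
  have "Q (B y) = B (Q y)" for y
    by (simp add: B_def bounded_op_diff[OF Q] bounded_op_scaleR[OF Q] QA)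
  then have "Q ((B ^^ k) y) = (B ^^ k) (Q y)" for k y by (induction k) simp_all
  then have "(\<lambda>k. sqrt_coeff k *\<^sub>R (B ^^ k) (Q x)) sums Q (Y x)"
    using bounded_linear.sums[OF bounded_op_linear[OF Q] Y_sums]
    by (simp add: bounded_op_scaleR[OF Q])
  then show ?thesis using Y_sums sums_unique2 by blast
qed

private lemma Y_scaleC: "Y (a *\<^sub>C x) = a *\<^sub>C Y x"
proof -
  have "(\<lambda>k. sqrt_coeff k *\<^sub>R (B ^^ k) (a *\<^sub>C x)) sums (a *\<^sub>C Y x)"
    using bounded_linear.sums[OF bounded_linear_scaleC Y_sums]
    by (simp add: bounded_op_scaleC[OF bounded_op_B_funpow] scaleC_scaleR)
  then show ?thesis using Y_sums sums_unique2 by blast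
qed

private lemma cinner_Y: "cinner x (Y x) = of_real (Re (cinner x (Y x)))"
  and Re_cinner_Y_le: "Re (cinner x (Y x)) \<le> (norm x)\<^sup>2"
proof -
  define q where "q k = sqrt_coeff k * Re (cinner x ((B ^^ k) x))" for k
  have "(\<lambda>k. cinner x (sqrt_coeff k *\<^sub>R (B ^^ k) x)) sums cinner x (Y x)"
    by (rule bounded_linear.sums[OF bounded_linear_cinner_right Y_sums])
  moreover have "cinner x (sqrt_coeff k *\<^sub>R (B ^^ k) x) = of_real (q k)" for k
    by (metis q_def selfadj_cinner_real[OF selfadj_funpow[OF B_selfadj]] cinner_scaleR_right
        of_real_mult)
  ultimately have q_sums: "(\<lambda>k. of_real (q k)) sums cinner x (Y x)" by simp
  have "(\<lambda>k. Im (of_real (q k))) sums Im (cinner x (Y x))"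
    by (rule bounded_linear.sums[OF bounded_linear_Im q_sums])
  then show "cinner x (Y x) = of_real (Re (cinner x (Y x)))"
    using sums_0[of "\<lambda>_. 0::real"] by (simp add: complex_eq_iff sums_unique2)
  have "(\<lambda>k. Re (of_real (q k))) sums Re (cinner x (Y x))"
    by (rule bounded_linear.sums[OF bounded_linear_Re q_sums])
  then have Re_sums: "q sums Re (cinner x (Y x))" by simp
  have bound_sums: "(\<lambda>k. sqrt_coeff k * (norm x)\<^sup>2) sums (suminf sqrt_coeff * (norm x)\<^sup>2)"
    by (rule sums_mult2[OF summable_sums[OF summable_sqrt_coeff]])
  have q_le: "q k \<le> sqrt_coeff k * (norm x)\<^sup>2" for k
  proof -
    have "Re (cinner x ((B ^^ k) x)) \<le> norm x * norm x"
      using Re_cinner_le[of x] norm_B_funpow_le[of k x] mult_left_mono order_trans norm_ge_zero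
      by metis
    then show ?thesis
      using sqrt_coeff_nonneg[of k] by (simp add: q_def power2_eq_square mult_left_mono)
  qed
  have "Re (cinner x (Y x)) \<le> suminf sqrt_coeff * (norm x)\<^sup>2"
    by (rule sums_le[OF q_le Re_sums bound_sums])
  also have "\<dots> \<le> 1 * (norm x)\<^sup>2" by (intro mult_right_mono suminf_sqrt_coeff_le) simp
  finally show "Re (cinner x (Y x)) \<le> (norm x)\<^sup>2" by simp
qed

private definition "R x = sqrt c *\<^sub>R (x - Y x)"

private lemma R_positive: "positive_op R"
proof -
  have "bounded_linear R" unfolding R_def[abs_def]
    by (intro bounded_linear_compose[OF bounded_linear_scaleR_right, of "\<lambda>x. x - Y x",
          simplified o_def] bounded_linear_sub bounded_linear_ident bounded_linear_Y)
  then have "bounded_op R"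
    by (simp add: bounded_op_def R_def Y_scaleC scaleC_scaleR scaleC_diff_right)
  moreover have "cinner x (R x) = of_real (sqrt c * ((norm x)\<^sup>2 - Re (cinner x (Y x))))" for x
    using cinner_Y[of x] by (simp add: R_def cinner_scaleR_right cinner_diff_right cinner_self
        algebra_simps)
  ultimately show ?thesis
    unfolding positive_op_def using Re_cinner_Y_le c_pos by simp
qed

private lemma R_R: "R (R x) = A x"
proof -
  have Y_lin: "Y (u - v) = Y u - Y v" "Y (r *\<^sub>R u) = r *\<^sub>R Y u" for u v r
    using bounded_linear_Y by (simp_all add: linear_simps)
  have "R (R x) = c *\<^sub>R (x - Y x - (Y x - Y (Y x)))"
    using c_pos by (simp add: R_def Y_lin scaleR_diff_right[symmetric])
  also have "x - Y x - (Y x - Y (Y x)) = x - B x" by (simp add: Y_Y scaleR_2 algebra_simps)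
  finally show ?thesis using c_pos by (simp add: B_def)
qed

lemma positive_sqrt_exists:
  "\<exists>R. positive_op R \<and> (\<forall>x. R (R x) = A x) \<and>
     (\<forall>Q. bounded_op Q \<and> (\<forall>x. Q (A x) = A (Q x)) \<longrightarrow> (\<forall>x. Q (R x) = R (Q x)))"
proof -
  have "Q (R x) = R (Q x)" if "bounded_op Q" "\<And>x. Q (A x) = A (Q x)" for Q x
    unfolding R_def by (simp only: bounded_op_scaleR[OF that(1)] bounded_op_diff[OF that(1)]
        Y_commute[OF that])
  then show ?thesis using R_positive R_R by blast
qed

end

section \<open>The absolute value\<close>

text \<open>If \<open>R\<close> commutes with every operator commuting with \<open>A\<close>, then \<open>R\<close> and \<open>Q\<close> commute; for
\<open>y = R x - Q x\<close> this gives \<open>R y + Q y = 0\<close>, so both quadratic forms vanish at \<open>y\<close>.\<close>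
lemma positive_sqrt_unique:
  assumes R: "positive_op R" "\<And>x. R (R x) = A x"
    and R_commute: "\<And>Q. bounded_op Q \<Longrightarrow> (\<forall>x. Q (A x) = A (Q x)) \<Longrightarrow> (\<forall>x. Q (R x) = R (Q x))"
    and Q: "positive_op Q" "\<And>x. Q (Q x) = A x"
  shows "Q = R"
proof
  fix x
  have Rs: "selfadj R" and Qs: "selfadj Q" using R(1) Q(1) by (simp_all add: positive_op_selfadj)
  have bR: "bounded_op R" and bQ: "bounded_op Q" using Rs Qs by (simp_all add: selfadj_bounded_op)
  have pR: "0 \<le> Re (cinner v (R v))" and pQ: "0 \<le> Re (cinner v (Q v))" for v
    using R(1) Q(1) by (auto simp: positive_op_def)
  have QR: "Q (R z) = R (Q z)" for z using R_commute[OF bQ] by (simp flip: Q(2))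
  define y where "y = R x - Q x"
  have "R y + Q y = 0"
    by (simp add: y_def bounded_op_diff[OF bR] bounded_op_diff[OF bQ] R(2) Q(2) QR)
  then have "Re (cinner y (R y)) + Re (cinner y (Q y)) = 0"
    by (metis cinner_add_right cinner_zero_right plus_complex.sel(1) zero_complex.sel(1))
  then have "Re (cinner y (R y)) = 0" "Re (cinner y (Q y)) = 0"
    using pR[of y] pQ[of y] by linarith+
  then have "R y = 0" "Q y = 0"
    using positive_norm_sq_le[OF Rs invariant_UNIV pR, of y]
      positive_norm_sq_le[OF Qs invariant_UNIV pQ, of y] by simp_all
  then have "cinner y y = 0"
    by (simp add: y_def cinner_diff_right flip: selfadj_cinner[OF Rs] selfadj_cinner[OF Qs])
  then show "Q x = R x" by (simp add: y_def cinner_self_eq_zero)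
qed

lemma op_abs_positive_sqrt:
  assumes T: "bounded_op T"
  shows "positive_op (op_abs T) \<and> op_abs T \<circ> op_abs T = adj T \<circ> T"
proof -
  let ?A = "\<lambda>x. adj T (T x)"
  have A_nonneg: "0 \<le> Re (cinner x (?A x))" for x
    by (simp flip: cinner_adj_right[OF T] add: Re_cinner_self)
  obtain R where R: "positive_op R" "\<And>x. R (R x) = ?A x"
    and R_commute: "\<And>Q. bounded_op Q \<Longrightarrow> (\<forall>x. Q (?A x) = ?A (Q x)) \<Longrightarrow> (\<forall>x. Q (R x) = R (Q x))"
    using positive_sqrt_exists[OF selfadj_adj_compose[OF T] A_nonneg] by blast
  have "op_abs T = R"
    unfolding op_abs_def
  proof (rule the_equality)
    show "positive_op R \<and> R \<circ> R = adj T \<circ> T" using R by (auto simp: o_def)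
    show "Q = R" if "positive_op Q \<and> Q \<circ> Q = adj T \<circ> T" for Q
      using that by (intro positive_sqrt_unique[OF R R_commute]) (auto dest: fun_cong)
  qed
  then show ?thesis using R by (auto simp: o_def)
qed

lemma positive_op_abs: "bounded_op T \<Longrightarrow> positive_op (op_abs T)"
  using op_abs_positive_sqrt by blast

lemma op_abs_op_abs: "bounded_op T \<Longrightarrow> op_abs T (op_abs T x) = adj T (T x)"
  using op_abs_positive_sqrt[of T] by (metis comp_apply)

lemma selfadj_op_abs: "bounded_op T \<Longrightarrow> selfadj (op_abs T)"
  by (rule positive_op_selfadj[OF positive_op_abs])

lemma cinner_op_abs: "bounded_op T \<Longrightarrow> cinner (op_abs T x) (op_abs T y) = cinner (T x) (T y)"
  by (simp add: selfadj_cinner[OF selfadj_op_abs] op_abs_op_abs cinner_adj_right)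

lemma norm_op_abs: "bounded_op T \<Longrightarrow> norm (op_abs T x) = norm (T x)"
  by (rule norm_eq_of_cinner_eq) (rule cinner_op_abs)

section \<open>The polar factor\<close>

lemma closure_range_limit:
  fixes f :: "'a \<Rightarrow> 'b::metric_space"
  assumes "u \<in> closure (range f)"
  obtains a where "(\<lambda>n. f (a n)) \<longlonglongrightarrow> u"
proof -
  obtain s where s: "\<forall>n. s n \<in> range f" "s \<longlonglongrightarrow> u" using assms closure_sequential by blast
  then have "\<forall>n. \<exists>y. s n = f y" by blast
  then obtain a where "\<forall>n. s n = f (a n)" by metis
  then have "s = (\<lambda>n. f (a n))" by auto
  then show ?thesis using that s(2) by blast
qed

lemma limit_in_closure_range:
  fixes f :: "'a \<Rightarrow> 'b::metric_space"
  shows "(\<lambda>n. f (a n)) \<longlonglongrightarrow> u \<Longrightarrow> u \<in> closure (range f)"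
  unfolding closure_sequential by (intro exI[of _ "\<lambda>n. f (a n)"]) simp

text \<open>The polar factor is built as \<open>V = g \<circ> P\<close>, where \<open>P\<close> projects onto the closure of the
range of \<open>|T|\<close> and \<open>g\<close> is the isometric extension of \<open>|T| y \<mapsto> T y\<close> to that closure.\<close>
context
  fixes T :: "'a::complex_hilbert \<Rightarrow> 'a"
  assumes T: "bounded_op T"
begin

private abbreviation "A \<equiv> op_abs T"
private definition "L = closure (range A)"

private lemma selfadj_A: "selfadj A" and bounded_op_A: "bounded_op A"
  using selfadj_op_abs[OF T] by (simp_all add: selfadj_bounded_op)

private lemma A_in_L: "A y \<in> L"
  by (simp add: L_def closure_subset[THEN subsetD])

private lemma csubspace_L: "csubspace L"
proof -
  have "u + v \<in> L" if uv: "u \<in> L" "v \<in> L" for u v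
  proof -
    obtain a where a: "(\<lambda>n. A (a n)) \<longlonglongrightarrow> u"
      using uv(1) unfolding L_def by (rule closure_range_limit)
    obtain b where b: "(\<lambda>n. A (b n)) \<longlonglongrightarrow> v"
      using uv(2) unfolding L_def by (rule closure_range_limit)
    from tendsto_add[OF a b] show ?thesis
      unfolding L_def by (intro limit_in_closure_range[of A "\<lambda>n. a n + b n"])
        (simp add: bounded_op_add[OF bounded_op_A])
  qed
  moreover have "c *\<^sub>C u \<in> L" if u: "u \<in> L" for c u
  proof -
    obtain a where "(\<lambda>n. A (a n)) \<longlonglongrightarrow> u"
      using u unfolding L_def by (rule closure_range_limit)
    from bounded_linear.tendsto[OF bounded_linear_scaleC this, of c] show ?thesis
      unfolding L_def by (intro limit_in_closure_range[of A "\<lambda>n. c *\<^sub>C a n"])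
        (simp add: bounded_op_scaleC[OF bounded_op_A])
  qed
  ultimately show ?thesis
    using A_in_L[of 0] by (simp add: csubspace_def bounded_op_zero[OF bounded_op_A])
qed

private lemma closed_L: "closed L"
  by (simp add: L_def)

private lemma orth_compl_L: "x \<in> orth_compl L \<longleftrightarrow> T x = 0"
proof
  assume "x \<in> orth_compl L"
  then have "cinner (A (A x)) x = 0" using A_in_L by (simp add: orth_compl_def)
  then have "cinner (A x) (A x) = 0" by (simp add: selfadj_cinner[OF selfadj_A])
  then have "A x = 0" by (simp add: cinner_self_eq_zero)
  then show "T x = 0" using norm_op_abs[OF T, of x] by simp
next
  assume "T x = 0"
  then have "A x = 0" using norm_op_abs[OF T, of x] by simp
  then have "range A \<subseteq> {k. cinner k x = 0}"
    by (auto simp: selfadj_cinner[OF selfadj_A])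
  moreover have "closed {k. cinner k x = 0}"
    by (intro closed_Collect_eq continuous_on_const linear_continuous_on bounded_linear_cinner_left)
  ultimately have "L \<subseteq> {k. cinner k x = 0}" unfolding L_def by (rule closure_minimal)
  then show "x \<in> orth_compl L" by (auto simp: orth_compl_def)
qed

private definition "f0 u = T (SOME y. A y = u)"

private lemma f0_A: "f0 (A y) = T y"
proof -
  define y' where "y' = (SOME y'. A y' = A y)"
  have "A y' = A y" unfolding y'_def by (rule someI) (rule refl)
  then have "norm (T (y' - y)) = 0"
    using norm_op_abs[OF T, of "y' - y"] by (simp add: bounded_op_diff[OF bounded_op_A])
  then show ?thesis by (simp add: f0_def y'_def[symmetric] bounded_op_diff[OF T])
qed

private lemma uniformly_continuous_f0: "uniformly_continuous_on (range A) f0"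
  unfolding uniformly_continuous_on_def
proof (intro allI impI)
  fix e :: real assume "e > 0"
  have "dist (f0 (A b)) (f0 (A a)) = dist (A b) (A a)" for a b
    using norm_op_abs[OF T, of "b - a"]
    by (simp add: f0_A dist_norm bounded_op_diff[OF T] bounded_op_diff[OF bounded_op_A])
  then show "\<exists>d>0. \<forall>x\<in>range A. \<forall>x'\<in>range A. dist x' x < d \<longrightarrow> dist (f0 x') (f0 x) < e"
    using \<open>e > 0\<close> by auto
qed

private definition "g = (SOME g. continuous_on L g \<and> (\<forall>x\<in>range A. f0 x = g x))"

private lemma g_extends_f0: "continuous_on L g \<and> (\<forall>x\<in>range A. f0 x = g x)"
proof -
  obtain h where "uniformly_continuous_on L h" "\<And>x. x \<in> range A \<Longrightarrow> f0 x = h x"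
    unfolding L_def
    by (rule uniformly_continuous_on_extension_on_closure[OF uniformly_continuous_f0]) blast
  then have "\<exists>h. continuous_on L h \<and> (\<forall>x\<in>range A. f0 x = h x)"
    using uniformly_continuous_imp_continuous by blast
  then show ?thesis unfolding g_def by (rule someI_ex)
qed

private lemma g_A: "g (A y) = T y"
  using g_extends_f0 f0_A[of y] by auto

private lemma g_limit:
  assumes "(\<lambda>n. A (a n)) \<longlonglongrightarrow> u"
  shows "(\<lambda>n. T (a n)) \<longlonglongrightarrow> g u"
  using continuous_on_tendsto_compose[OF conjunct1[OF g_extends_f0] assms] assms A_in_L
  by (simp add: g_A L_def limit_in_closure_range)

private lemma g_add: "u \<in> L \<Longrightarrow> v \<in> L \<Longrightarrow> g (u + v) = g u + g v"
proof -
  assume uv: "u \<in> L" "v \<in> L"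
  obtain a where a: "(\<lambda>n. A (a n)) \<longlonglongrightarrow> u"
    using uv(1) unfolding L_def by (rule closure_range_limit)
  obtain b where b: "(\<lambda>n. A (b n)) \<longlonglongrightarrow> v"
    using uv(2) unfolding L_def by (rule closure_range_limit)
  have "(\<lambda>n. A (a n + b n)) \<longlonglongrightarrow> u + v"
    using tendsto_add[OF a b] by (simp add: bounded_op_add[OF bounded_op_A])
  from g_limit[OF this] tendsto_add[OF g_limit[OF a] g_limit[OF b]] show ?thesis
    by (simp add: bounded_op_add[OF T] LIMSEQ_unique)
qed

private lemma g_scaleC: "u \<in> L \<Longrightarrow> g (c *\<^sub>C u) = c *\<^sub>C g u"
proof -
  assume "u \<in> L"
  then obtain a where a: "(\<lambda>n. A (a n)) \<longlonglongrightarrow> u" unfolding L_def by (rule closure_range_limit)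
  have "(\<lambda>n. A (c *\<^sub>C a n)) \<longlonglongrightarrow> c *\<^sub>C u"
    using bounded_linear.tendsto[OF bounded_linear_scaleC a, of c]
    by (simp add: bounded_op_scaleC[OF bounded_op_A])
  from g_limit[OF this] bounded_linear.tendsto[OF bounded_linear_scaleC g_limit[OF a], of c]
  show ?thesis by (simp add: bounded_op_scaleC[OF T] LIMSEQ_unique)
qed

private lemma cinner_g: "u \<in> L \<Longrightarrow> v \<in> L \<Longrightarrow> cinner (g u) (g v) = cinner u v"
proof -
  assume uv: "u \<in> L" "v \<in> L"
  obtain a where a: "(\<lambda>n. A (a n)) \<longlonglongrightarrow> u"
    using uv(1) unfolding L_def by (rule closure_range_limit)
  obtain b where b: "(\<lambda>n. A (b n)) \<longlonglongrightarrow> v"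
    using uv(2) unfolding L_def by (rule closure_range_limit)
  from tendsto_cinner[OF g_limit[OF a] g_limit[OF b]] tendsto_cinner[OF a b] show ?thesis
    by (simp add: cinner_op_abs[OF T] LIMSEQ_unique)
qed

private definition "V x = g (proj L x)"

private lemmas proj_L = proj_in[OF csubspace_L closed_L] proj_orth[OF csubspace_L closed_L]
  proj_id[OF csubspace_L closed_L] proj_add[OF csubspace_L closed_L]
  proj_scaleC[OF csubspace_L closed_L] norm_proj_le[OF csubspace_L closed_L]

private lemma V_A: "V (A y) = T y"
  by (simp add: V_def proj_L A_in_L g_A)

private lemma cinner_V: "cinner (V x) (V y) = cinner (proj L x) (proj L y)"
  by (simp add: V_def cinner_g proj_L)

private lemma norm_V: "norm (V x) = norm (proj L x)"
  by (rule norm_eq_of_cinner_eq) (rule cinner_V)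

private lemma bounded_op_V: "bounded_op V"
proof -
  have scale: "V (c *\<^sub>C x) = c *\<^sub>C V x" for c x by (simp add: V_def proj_L g_scaleC)
  have "bounded_linear V"
  proof (rule bounded_linear_intro)
    show "V (x + y) = V x + V y" for x y by (simp add: V_def proj_L g_add)
    show "V (r *\<^sub>R x) = r *\<^sub>R V x" for r x by (metis scale scaleC_of_real)
    show "norm (V x) \<le> norm x * 1" for x by (simp add: norm_V proj_L)
  qed
  then show ?thesis using scale by (simp add: bounded_op_def)
qed

private lemma V_eq_0_iff: "V x = 0 \<longleftrightarrow> T x = 0"
  using norm_V[of x] proj_eq_0_iff[OF csubspace_L closed_L] orth_compl_L by (metis norm_eq_zero)

private lemma adj_V_V: "adj V (V x) = proj L x"
proof (rule cinner_ext)
  fix z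
  have "cinner z (adj V (V x)) = cinner (proj L z) (proj L x)"
    by (simp add: cinner_adj_right[OF bounded_op_V, symmetric] cinner_V)
  also have "\<dots> = cinner z (proj L x)" by (rule cinner_proj[OF csubspace_L closed_L, symmetric])
  finally show "cinner z (adj V (V x)) = cinner z (proj L x)" .
qed

private lemma V_polar: "partial_isometry V \<and> T = V \<circ> A \<and> op_ker V = op_ker T"
proof (intro conjI)
  have "V (adj V (V x)) = V x" for x by (simp only: adj_V_V) (simp add: V_def proj_L)
  then show "partial_isometry V" by (auto simp: partial_isometry_def bounded_op_V)
  show "T = V \<circ> A" by (auto simp: V_A)
  show "op_ker V = op_ker T" by (simp add: op_ker_def V_eq_0_iff)
qed

private lemma V_unique:
  assumes W: "partial_isometry W" "T = W \<circ> A" "op_ker W = op_ker T"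
  shows "W = V"
proof
  fix x
  have bW: "bounded_op W" using W(1) by (simp add: partial_isometry_def)
  have "T (x - proj L x) = 0" using orth_compl_L proj_L by blast
  moreover have "W z = 0 \<longleftrightarrow> T z = 0" for z using W(3) by (auto simp: op_ker_def set_eq_iff)
  ultimately have "W (x - proj L x) = 0" "V (x - proj L x) = 0" using V_eq_0_iff by blast+
  then have "W x = W (proj L x)" "V x = V (proj L x)"
    by (simp_all add: bounded_op_diff[OF bW] bounded_op_diff[OF bounded_op_V])
  moreover have "L \<subseteq> {u. W u = V u}"
    unfolding L_def
  proof (rule closure_minimal)
    show "range A \<subseteq> {u. W u = V u}" using W(2) V_A by (auto simp: fun_eq_iff)
    show "closed {u. W u = V u}"
      by (intro closed_Collect_eq linear_continuous_on bounded_op_linear bW bounded_op_V)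
  qed
  ultimately show "W x = V x" using proj_L by auto
qed

private lemma polar_factor_eq: "polar_factor T = V"
  unfolding polar_factor_def by (rule the_equality) (use V_polar V_unique in blast)+

lemma partial_isometry_polar_factor: "partial_isometry (polar_factor T)"
  and polar_decomposition: "T = polar_factor T \<circ> op_abs T"
  and op_ker_polar_factor: "op_ker (polar_factor T) = op_ker T"
  using V_polar by (simp_all add: polar_factor_eq)

lemma norm_polar_factor_le: "norm (polar_factor T x) \<le> norm x"
  by (simp add: polar_factor_eq norm_V proj_L)

end

section \<open>Distance from partial isometries\<close>

lemma numerical_range_infimum:
  assumes A: "bounded_op A" and M: "csubspace M"
    and nonneg: "\<And>u. u \<in> M \<Longrightarrow> 0 \<le> Re (cinner u (A u))"
    and v: "v \<in> M" "v \<noteq> 0"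
  obtains c where "0 \<le> c" "c * (norm v)\<^sup>2 \<le> Re (cinner v (A v))"
    "\<And>u. u \<in> M \<Longrightarrow> c * (norm u)\<^sup>2 \<le> Re (cinner u (A u))"
    "\<And>e. e > 0 \<Longrightarrow> \<exists>w\<in>M. norm w = 1 \<and> Re (cinner w (A w)) < c + e"
proof -
  define q where "q u = Re (cinner u (A u))" for u
  define S where "S = {q w | w. w \<in> M \<and> norm w = 1}"
  have q_normalize: "q ((1 / norm u) *\<^sub>R u) = q u / (norm u)\<^sup>2" for u
    by (simp add: q_def bounded_op_scaleR[OF A] cinner_scaleR_left cinner_scaleR_right
        power2_eq_square)
  have unit: "(1 / norm u) *\<^sub>R u \<in> M \<and> norm ((1 / norm u) *\<^sub>R u) = 1" if "u \<in> M" "u \<noteq> 0" for u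
    using that csubspace_scaleR[OF M] by simp
  have S_ne: "S \<noteq> {}" using unit[OF v] by (auto simp: S_def)
  have S_bdd: "bdd_below S" unfolding S_def bdd_below_def q_def using nonneg by blast
  define c where "c = Inf S"
  have c_le: "c \<le> q u / (norm u)\<^sup>2" if "u \<in> M" "u \<noteq> 0" for u
    unfolding c_def using unit[OF that] q_normalize[of u]
    by (intro cInf_lower[OF _ S_bdd]) (force simp: S_def simp del: norm_scaleR)
  show ?thesis
  proof
    show "0 \<le> c" unfolding c_def by (rule cInf_greatest[OF S_ne]) (auto simp: S_def q_def nonneg)
    show bottom: "c * (norm u)\<^sup>2 \<le> Re (cinner u (A u))" if "u \<in> M" for u
      using c_le[OF that] by (cases "u = 0") (simp_all add: q_def field_simps)
    show "c * (norm v)\<^sup>2 \<le> Re (cinner v (A v))" by (rule bottom[OF v(1)])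
    show "\<exists>w\<in>M. norm w = 1 \<and> Re (cinner w (A w)) < c + e" if "e > 0" for e
      using cInf_lessD[OF S_ne, of "c + e"] that by (auto simp: c_def S_def q_def)
  qed
qed

text \<open>Choose \<open>c\<close> as the bottom of the numerical range of \<open>A\<close> on \<open>M\<close>. If \<open>c < \<mu>\<close>, then
\<open>C = A - c\<close> is positive on \<open>M\<close> and \<open>\<parallel>C w\<parallel>\<^sup>2 \<le> \<parallel>C\<parallel> \<langle>w, C w\<rangle>\<close> is small for a unit vector
\<open>w\<close> with \<open>\<langle>w, A w\<rangle>\<close> close to \<open>c\<close>; so \<open>\<parallel>A w\<parallel> < \<mu>\<close>, a contradiction.\<close>
lemma positive_quadratic_ge_of_norm_ge:
  assumes A: "selfadj A" and M: "invariant A M"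
    and nonneg: "\<And>u. u \<in> M \<Longrightarrow> 0 \<le> Re (cinner u (A u))"
    and low: "\<And>u. u \<in> M \<Longrightarrow> \<mu> * norm u \<le> norm (A u)"
    and v: "v \<in> M"
  shows "\<mu> * (norm v)\<^sup>2 \<le> Re (cinner v (A v))"
proof (rule ccontr)
  assume contra: "\<not> ?thesis"
  then have "v \<noteq> 0" by (auto simp: bounded_op_zero[OF selfadj_bounded_op[OF A]])
  have csM: "csubspace M" using M by (simp add: invariant_def)
  obtain c where c0: "0 \<le> c" and cv: "c * (norm v)\<^sup>2 \<le> Re (cinner v (A v))"
    and bottom: "\<And>u. u \<in> M \<Longrightarrow> c * (norm u)\<^sup>2 \<le> Re (cinner u (A u))"
    and near: "\<And>e. e > 0 \<Longrightarrow> \<exists>w\<in>M. norm w = 1 \<and> Re (cinner w (A w)) < c + e"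
    using numerical_range_infimum[OF selfadj_bounded_op[OF A] csM nonneg v \<open>v \<noteq> 0\<close>] by blast
  have c_mu: "c < \<mu>" using cv contra \<open>v \<noteq> 0\<close> by (smt (verit) mult_right_mono zero_le_power2)
  define C where "C x = A x - c *\<^sub>R x" for x
  have C: "selfadj C" unfolding C_def[abs_def]
    by (intro selfadj_diff_op selfadj_scaleR_op A selfadj_ident)
  have CM: "invariant C M"
    using M by (auto simp: invariant_def C_def intro: csubspace_diff csubspace_scaleR)
  have C_form: "Re (cinner u (C u)) = Re (cinner u (A u)) - c * (norm u)\<^sup>2" for u
    by (simp add: C_def cinner_diff_right cinner_scaleR_right Re_cinner_self)
  define K where "K = onorm C"
  have K0: "0 \<le> K" unfolding K_def by (rule bounded_op_onorm_nonneg[OF selfadj_bounded_op[OF C]])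
  obtain w where w: "w \<in> M" "norm w = 1"
    and qw: "Re (cinner w (A w)) < c + (\<mu> - c)\<^sup>2 / (K + 1)"
    using near[of "(\<mu> - c)\<^sup>2 / (K + 1)"] c_mu K0 by auto
  have "(norm (C w))\<^sup>2 \<le> K * Re (cinner w (C w))"
    unfolding K_def using bottom C_form
    by (intro positive_norm_sq_le[OF C CM _ w(1)]) (metis diff_ge_0_iff_ge)
  also have "\<dots> \<le> K * ((\<mu> - c)\<^sup>2 / (K + 1))"
    using qw C_form[of w] w(2) K0 by (intro mult_left_mono) auto
  also have "\<dots> < (\<mu> - c)\<^sup>2" using K0 c_mu by (simp add: field_simps)
  finally have "norm (C w) < \<mu> - c" using c_mu by (simp add: power_less_imp_less_base)
  moreover have "norm (A w) \<le> norm (C w) + c"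
    using norm_triangle_ineq[of "C w" "c *\<^sub>R w"] w(2) c0 by (simp add: C_def)
  ultimately show False using low[OF w(1)] w(2) by simp
qed

text \<open>The norm bounds on \<open>A\<close> bound the quadratic form of \<open>A - 1\<close> by \<open>\<delta>\<close>, and that form
controls the norm of the self-adjoint operator \<open>A - 1\<close>.\<close>
lemma positive_near_isometry_norm_diff_le:
  assumes A: "selfadj A" and M: "invariant A M"
    and nonneg: "\<And>u. u \<in> M \<Longrightarrow> 0 \<le> Re (cinner u (A u))"
    and near: "\<And>v. v \<in> M \<Longrightarrow> \<bar>norm (A v) - norm v\<bar> \<le> \<delta> * norm v"
    and u: "u \<in> M"
  shows "norm (A u - u) \<le> \<delta> * norm u"
proof -
  have A_low: "(1 - \<delta>) * norm v \<le> norm (A v)" and A_up: "norm (A v) \<le> (1 + \<delta>) * norm v"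
    if "v \<in> M" for v
    using near[OF that] by (simp_all add: abs_le_iff algebra_simps)
  have low: "(1 - \<delta>) * (norm v)\<^sup>2 \<le> Re (cinner v (A v))" if "v \<in> M" for v
    by (rule positive_quadratic_ge_of_norm_ge[OF A M nonneg A_low that])
  have up: "Re (cinner v (A v)) \<le> (1 + \<delta>) * (norm v)\<^sup>2" if "v \<in> M" for v
  proof -
    have "Re (cinner v (A v)) \<le> norm v * norm (A v)" by (rule Re_cinner_le)
    also have "\<dots> \<le> norm v * ((1 + \<delta>) * norm v)" by (intro mult_left_mono A_up[OF that]) simp
    finally show ?thesis by (simp add: power2_eq_square algebra_simps)
  qed
  have D: "selfadj (\<lambda>x. A x - x)" by (intro selfadj_diff_op A selfadj_ident)
  have DM: "invariant (\<lambda>x. A x - x) M"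
    using M by (auto simp: invariant_def intro: csubspace_diff)
  have "\<bar>Re (cinner v (A v - v))\<bar> \<le> \<delta> * (norm v)\<^sup>2" if "v \<in> M" for v
    using low[OF that] up[OF that]
    by (simp add: cinner_diff_right Re_cinner_self abs_le_iff algebra_simps)
  then show ?thesis by (rule selfadj_norm_le_quadratic_bound[OF D DM _ u])
qed

lemma partial_isometry_kernel_part:
  assumes "partial_isometry X"
  shows "X (x - adj X (X x)) = 0"
  using assms by (simp add: partial_isometry_def bounded_op_diff fun_eq_iff)

lemma partial_isometry_norm_eq:
  assumes X: "partial_isometry X" and v: "v \<in> orth_compl (op_ker X)"
  shows "norm (X v) = norm v"
proof -
  have bX: "bounded_op X" using X by (simp add: partial_isometry_def)
  have "cinner (v - adj X (X v)) v = 0"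
    using v partial_isometry_kernel_part[OF X] by (simp add: orth_compl_def op_ker_def)
  then have "cinner v (adj X (X v)) = cinner v v"
    by (subst (asm) cinner_cnj) (simp add: cinner_diff_right)
  then show ?thesis by (intro norm_eq_of_cinner_eq) (simp add: cinner_adj_right[OF bX])
qed

lemma adj_compose_in_orth_compl:
  assumes "bounded_op X"
  shows "adj X (X x) \<in> orth_compl (op_ker X)"
  by (simp add: orth_compl_def op_ker_def cinner_adj_right[OF assms, symmetric])

lemma op_abs_invariant_orth_compl_ker:
  assumes T: "bounded_op T"
  shows "invariant (op_abs T) (orth_compl (op_ker T))"
proof -
  have "op_abs T k = 0" if "T k = 0" for k using norm_op_abs[OF T, of k] that by simp
  then have "op_abs T u \<in> orth_compl (op_ker T)" for u
    by (auto simp: orth_compl_def op_ker_def selfadj_cinner[OF selfadj_op_abs[OF T], symmetric])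
  then show ?thesis by (simp add: invariant_def csubspace_orth_compl)
qed

lemma norm_adj_compose_le:
  assumes X: "partial_isometry X"
  shows "norm (adj X (X x)) \<le> norm x"
proof -
  define u where "u = adj X (X x)"
  have bX: "bounded_op X" using X by (simp add: partial_isometry_def)
  have "cinner u (x - u) = 0"
    using adj_compose_in_orth_compl[OF bX] partial_isometry_kernel_part[OF X]
    by (subst cinner_cnj) (simp add: u_def orth_compl_def op_ker_def)
  then have "(norm x)\<^sup>2 = (norm u)\<^sup>2 + (norm (x - u))\<^sup>2"
    using norm_add_Pythagorean[of u "x - u"] by simp
  then show ?thesis by (simp add: u_def power2_le_imp_le)
qed

text \<open>\<open>x - X\<^sup>* X x\<close> lies in \<open>ker X = ker T\<close>, where both \<open>T\<close> and \<open>V\<close> vanish.\<close>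
lemma polar_factor_diff_eq:
  fixes T :: "'a::complex_hilbert \<Rightarrow> 'a" and x :: 'a
  assumes T: "bounded_op T" and X: "partial_isometry X" and ker: "op_ker X = op_ker T"
  defines "V \<equiv> polar_factor T" and "u \<equiv> adj X (X x)"
  shows "T x - V x = V (op_abs T u - u)"
proof -
  have bV: "bounded_op V"
    using partial_isometry_polar_factor[OF T] by (simp add: V_def partial_isometry_def)
  have "x - u \<in> op_ker T"
    using partial_isometry_kernel_part[OF X] ker by (auto simp: u_def op_ker_def)
  then have "T (x - u) = 0" "V (x - u) = 0"
    using op_ker_polar_factor[OF T] by (auto simp: op_ker_def V_def)
  then have "T x - V x = T u - V u"
    by (simp add: bounded_op_diff[OF T] bounded_op_diff[OF bV])
  also have "\<dots> = V (op_abs T u - u)"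
    using polar_decomposition[OF T, folded V_def] by (simp add: bounded_op_diff[OF bV] fun_eq_iff)
  finally show ?thesis .
qed

lemma polar_factor_dist_le:
  fixes T :: "'a::complex_hilbert \<Rightarrow> 'a"
  assumes T: "bounded_op T" and X: "partial_isometry X" and ker: "op_ker X = op_ker T"
  shows "onorm (\<lambda>x. T x - polar_factor T x) \<le> onorm (\<lambda>x. T x - X x)"
proof -
  define A where "A = op_abs T"
  define M where "M = orth_compl (op_ker T)"
  define \<delta> where "\<delta> = onorm (\<lambda>x. T x - X x)"
  have bX: "bounded_op X" using X by (simp add: partial_isometry_def)
  have \<delta>0: "0 \<le> \<delta>"
    unfolding \<delta>_def by (rule bounded_op_onorm_nonneg[OF bounded_op_diff_op[OF T bX]])
  have \<delta>: "norm (T x - X x) \<le> \<delta> * norm x" for x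
    unfolding \<delta>_def by (rule bounded_op_norm_le[OF bounded_op_diff_op[OF T bX]])
  have A_near: "\<bar>norm (A v) - norm v\<bar> \<le> \<delta> * norm v" if "v \<in> M" for v
    using that partial_isometry_norm_eq[OF X] norm_triangle_ineq3[of "T v" "X v"] \<delta>[of v]
    by (simp add: A_def M_def ker norm_op_abs[OF T])
  have A_nonneg: "0 \<le> Re (cinner u (A u))" for u
    using positive_op_abs[OF T] by (simp add: A_def positive_op_def)
  have A_selfadj: "selfadj A" and AM: "invariant A M"
    using selfadj_op_abs[OF T] op_abs_invariant_orth_compl_ker[OF T] by (simp_all add: A_def M_def)
  have "norm (T x - polar_factor T x) \<le> \<delta> * norm x" for x
  proof -
    define u where "u = adj X (X x)"
    have uM: "u \<in> M" using adj_compose_in_orth_compl[OF bX] by (simp add: u_def M_def ker)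
    have "norm (T x - polar_factor T x) \<le> norm (A u - u)"
      using polar_factor_diff_eq[OF T X ker] norm_polar_factor_le[OF T] by (simp add: A_def u_def)
    also have "\<dots> \<le> \<delta> * norm u"
      by (rule positive_near_isometry_norm_diff_le[OF A_selfadj AM A_nonneg A_near uM])
    also have "\<dots> \<le> \<delta> * norm x"
      using norm_adj_compose_le[OF X] \<delta>0 by (simp add: u_def mult_left_mono)
    finally show ?thesis .
  qed
  then show ?thesis unfolding \<delta>_def[symmetric] using \<delta>0 by (intro onorm_bound) simp_all
qed

theorem corollary2p4:
  fixes T :: "'a::complex_hilbert \<Rightarrow> 'a"
  assumes "separable_space (euclidean :: 'a topology)"
    and "bounded_op T"
  shows "onorm (\<lambda>x. T x - polar_factor T x) \<in>
           {onorm (\<lambda>x. T x - X x) | X. partial_isometry X \<and> op_ker X = op_ker T}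
       \<and> (\<forall>X. partial_isometry X \<and> op_ker X = op_ker T \<longrightarrow>
             onorm (\<lambda>x. T x - polar_factor T x) \<le> onorm (\<lambda>x. T x - X x))"
  using partial_isometry_polar_factor[OF assms(2)] op_ker_polar_factor[OF assms(2)]
    polar_factor_dist_le[OF assms(2)] by blast
end
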